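(* Let $n\ge1$, $Q:[0,\infty)\to\mathbb{C}^{n\times n}$ with $Q=Q^*$ and $\int_0^\infty(1+t)|Q(t)|\,dt<\infty$, $U$ an $n\times n$ unitary matrix, and $\mathcal{L}=-\frac{d^2}{dx^2}+Q$ the selfadjoint operator on $L^2([0,\infty);\mathbb{C}^n)$ with boundary condition $\frac{i}{2}(U^*-\mathbb{I})f(0)+\frac12(U^*+\mathbb{I})f'(0)=0$, assumed to have no virtual level at zero. For real $k\ne0$ let $\Psi(x,k)=F(x,-k)+F(x,k)S(k)$ be the scattered wave, where $F$ is the Jost solution and $S$ the scattering matrix. Then $$U=\big(\Psi(0,k)-i\Psi_x(0,k)\big)\big(\Psi(0,k)+i\Psi_x(0,k)\big)^{-1}.$$ In particular, the boundary condition $U$ is recovered from the scattering matrix and the kernel $K$ of the transformation operator (which determines $F$).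
   Context: Jost solution: $F(x,k)$ ($\operatorname{Im}k\ge0$) is the matrix solution of $-F''+QF=k^2F$ with $F(x,k)-e^{ikx}\mathbb{I}\to0$ as $x\to\infty$, and $F(x,k)=e^{ikx}\mathbb{I}+\int_x^\infty K(x,t)e^{ikt}dt$ (transformation operator). With $A=\frac12(U+\mathbb{I})$, $B=\frac{i}{2}(U-\mathbb{I})$, the scattering matrix for real $k\ne0$ is $S(k)=-[F(0,k)^*B-F_x(0,k)^*A][F(0,-k)^*B-F_x(0,-k)^*A]^{-1}$. "No virtual level at zero" is the paper's standing assumption that zero is not a virtual level (in particular not an eigenvalue) of $\mathcal{L}$. *)

theory Defs
  imports "HOL-Analysis.Analysis"
begin

definition adj :: "complex^'n^'m \<Rightarrow> complex^'m^'n" where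
  "adj A = (\<chi> i j. cnj (A $ j $ i))"

text \<open>Zero is a virtual level of the operator -d^2/dx^2 + Q on the half line with
  boundary condition (i/2)(U^* - I) f(0) + (1/2)(U^* + I) f'(0) = 0 iff there is a
  nonzero bounded solution of -f'' + Q f = 0 on [0,\<infinity>) (in the Caratheodory sense:
  f is C^1 and f' is an indefinite integral of Q f) satisfying the boundary condition.\<close>
definition zero_virtual_level ::
  "(real \<Rightarrow> complex^'n^'n) \<Rightarrow> complex^'n^'n \<Rightarrow> bool" where
  "zero_virtual_level Q U \<longleftrightarrow>
     (\<exists>(f :: real \<Rightarrow> complex^'n) f'.
        (\<exists>x\<ge>0. f x \<noteq> 0) \<and>
        bounded (f ` {0..}) \<and>
        (\<forall>x\<ge>0. (f has_vector_derivative f' x) (at x within {0..})) \<and>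
        (\<forall>x\<ge>0. ((\<lambda>t. Q t *v f t) has_integral (f' x - f' 0)) {0..x}) \<and>
        (mat (\<i>/2) ** (adj U - mat 1)) *v f 0 + (mat (1/2) ** (adj U + mat 1)) *v f' 0 = 0)"

end

theory Submission
  imports Defs
begin

(*
  For real k the Wronskian W[Y,Z] = Y^* Z' - Y'^* Z of two solutions of -Y'' + Q Y = k^2 Y is
  constant, because Q is selfadjoint.  Since F(x,k) ~ e^{ikx}, and the integrability of Q forces
  F_x(x,k) ~ ik e^{ikx} as well, letting x -> oo gives W[F(k),F(k)] = 2ik, W[F(-k),F(-k)] = -2ik
  and W[F(-k),F(k)] = 0 at x = 0.  These identities exhibit a left, hence a right, inverse of the
  block matrix [[F(0,k), F(0,-k)], [F_x(0,k), F_x(0,-k)]]; the resulting dual identities show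
  that the denominator of S(k) is invertible and that Psi satisfies the boundary condition
  A^* Psi_x(0) = B^* Psi(0).  For unitary U this condition is U^* (Psi - i Psi_x) = Psi + i Psi_x,
  and Psi + i Psi_x is invertible since Psi(0) and Psi_x(0) have no common kernel vector.

  F_x is only an indefinite integral, so W is not differentiable; its increments are controlled
  by first-order estimates on short intervals, summed over a fine partition.
*)

section \<open>Complex matrices\<close>

lemma adj_adj [simp]: "adj (adj A) = A"
  by (simp add: adj_def vec_eq_iff)

lemma adj_matrix_mult: "adj (A ** B) = adj B ** adj (A :: complex^'n^'m)"
  by (simp add: adj_def matrix_matrix_mult_def vec_eq_iff mult.commute)

lemma adj_add [simp]: "adj (A + B) = adj A + adj B"
  and adj_diff [simp]: "adj (A - B) = adj A - adj B"
  and adj_zero [simp]: "adj 0 = 0"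
  and adj_scaleR: "adj (r *\<^sub>R A) = r *\<^sub>R adj A"
  by (simp_all add: adj_def vec_eq_iff)

lemma adj_mat [simp]: "adj (mat c :: complex^'n^'n) = mat (cnj c)"
  by (simp add: adj_def mat_def vec_eq_iff)

lemma matrix_mult_rdistrib: "(A + B) ** C = A ** C + B ** (C :: 'a::semiring_1^'n^'m)"
  by (simp add: matrix_matrix_mult_def vec_eq_iff distrib_right sum.distrib)

lemma matrix_mult_diff_rdistrib: "(A - B) ** C = A ** C - B ** (C :: 'a::ring_1^'n^'m)"
  by (simp add: matrix_matrix_mult_def vec_eq_iff left_diff_distrib sum_subtractf)

lemma matrix_mult_diff_ldistrib: "C ** (A - B) = C ** A - C ** (B :: 'a::ring_1^'n^'m)"
  by (simp add: matrix_matrix_mult_def vec_eq_iff right_diff_distrib sum_subtractf)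

lemma matrix_mult_uminus_left [simp]: "(- A) ** C = - (A ** (C :: 'a::ring_1^'n^'m))"
  by (simp add: matrix_matrix_mult_def vec_eq_iff sum_negf)

lemma matrix_mult_uminus_right [simp]: "C ** (- A) = - (C ** (A :: 'a::ring_1^'n^'m))"
  by (simp add: matrix_matrix_mult_def vec_eq_iff sum_negf)

lemmas matrix_mult_distribs = matrix_add_ldistrib matrix_mult_rdistrib matrix_mult_diff_ldistrib
  matrix_mult_diff_rdistrib matrix_mult_uminus_left matrix_mult_uminus_right

lemma mat_add [simp]: "mat a + mat b = (mat (a + b) :: 'a::semiring_1^'n^'n)"
  by (simp add: mat_def vec_eq_iff)

lemma mat_uminus [simp]: "- mat c = (mat (- c) :: 'a::ring_1^'n^'n)"
  by (simp_all add: mat_def vec_eq_iff)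

(* On matrices, ( * ) is the entrywise product of HOL-Analysis; scaling by a complex number is *M. *)
definition scale_mat :: "complex \<Rightarrow> complex^'n^'m \<Rightarrow> complex^'n^'m" (infixr "*\<^sub>M" 75)
  where "c *\<^sub>M A = (\<chi> i j. c * A $ i $ j)"

lemma scale_mat_nth [simp]: "(c *\<^sub>M A) $ i $ j = c * A $ i $ j"
  by (simp add: scale_mat_def)

lemma mat_mult_eq_scale_mat [simp]: "mat c ** A = c *\<^sub>M A"
  and matrix_mult_mat_eq_scale_mat [simp]: "A ** mat c = c *\<^sub>M A"
  by (simp_all add: matrix_matrix_mult_def mat_def vec_eq_iff if_distrib if_distribR sum.delta
      sum.delta' mult.commute cong: if_cong)

lemma scale_mat_matrix_mult_left [simp]: "(c *\<^sub>M A) ** B = c *\<^sub>M (A ** B)"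
  and scale_mat_matrix_mult_right [simp]: "A ** (c *\<^sub>M B) = c *\<^sub>M (A ** B)"
  by (simp_all add: matrix_matrix_mult_def vec_eq_iff sum_distrib_left mult_ac)

lemma scale_mat_scale_mat [simp]: "a *\<^sub>M b *\<^sub>M A = (a * b) *\<^sub>M A"
  and scale_mat_one [simp]: "1 *\<^sub>M A = A"
  and scale_mat_zero_right [simp]: "c *\<^sub>M 0 = 0"
  and scale_mat_mat [simp]: "c *\<^sub>M mat d = mat (c * d)"
  and adj_scale_mat [simp]: "adj (c *\<^sub>M A) = cnj c *\<^sub>M adj A"
  and scale_mat_add_right: "c *\<^sub>M (A + B) = c *\<^sub>M A + c *\<^sub>M B"
  and scale_mat_diff_right: "c *\<^sub>M (A - B) = c *\<^sub>M A - c *\<^sub>M B"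
  and scale_mat_minus_right: "c *\<^sub>M (- A) = - (c *\<^sub>M A)"
  and scale_mat_add_left: "(a + b) *\<^sub>M A = a *\<^sub>M A + b *\<^sub>M A"
  and scale_mat_diff_left: "(a - b) *\<^sub>M A = a *\<^sub>M A - b *\<^sub>M A"
  and scale_mat_minus_left: "(- c) *\<^sub>M A = - (c *\<^sub>M A)"
  by (simp_all add: vec_eq_iff mat_def adj_def algebra_simps)

lemma mat_vector_mult [simp]: "mat c *v x = c *s (x :: 'a::comm_semiring_1^'n)"
  by (simp add: matrix_vector_mult_def mat_def vec_eq_iff if_distrib if_distribR sum.delta
      cong: if_cong)

lemma scale_mat_vector_mult: "(c *\<^sub>M A) *v x = c *s (A *v x)"
  by (simp add: matrix_vector_mult_def vec_eq_iff sum_distrib_left mult.assoc)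

lemmas scale_mat_distribs = scale_mat_add_right scale_mat_diff_right scale_mat_minus_right
  scale_mat_add_left scale_mat_diff_left scale_mat_minus_left

lemma scale_mat_eq_iff_eq_scale_mat:
  assumes "c * d = 1"
  shows "c *\<^sub>M A = B \<longleftrightarrow> A = d *\<^sub>M B"
  using assms by (metis scale_mat_scale_mat scale_mat_one mult.commute)

lemma matrix_mult_matrix_inv:
  fixes A :: "'a::field^'n^'n"
  assumes "invertible A"
  shows "A ** matrix_inv A = mat 1" and "matrix_inv A ** A = mat 1"
proof -
  have "\<exists>A'. A ** A' = mat 1 \<and> A' ** A = mat 1"
    using assms by (simp add: invertible_def)
  from someI_ex[OF this] show "A ** matrix_inv A = mat 1" "matrix_inv A ** A = mat 1"
    by (simp_all add: matrix_inv_def)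
qed

lemma invertible_if_ker_trivial:
  fixes A :: "'a::field^'n^'n"
  assumes "\<And>x. A *v x = 0 \<Longrightarrow> x = 0"
  shows "invertible A"
  using assms invertible_left_inverse matrix_left_invertible_ker by blast

lemma matrix_vector_mult_eq_zero_if_gram:
  fixes X :: "complex^'n^'m"
  assumes "(adj X ** X) *v w = 0"
  shows "X *v w = 0"
proof -
  define y where "y = X *v w"
  have "(\<Sum>i\<in>UNIV. cnj (w$i) * (adj X *v y)$i) = (\<Sum>k\<in>UNIV. \<Sum>i\<in>UNIV. cnj (X$k$i * w$i) * y$k)"
    by (subst sum.swap) (simp add: matrix_vector_mult_def adj_def sum_distrib_left mult_ac)
  also have "\<dots> = (\<Sum>k\<in>UNIV. cnj (y$k) * y$k)"
    by (simp add: y_def matrix_vector_mult_def sum_distrib_right)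
  finally have "(\<Sum>k\<in>UNIV. cnj (y$k) * y$k) = 0"
    using assms by (simp add: y_def matrix_vector_mul_assoc)
  moreover have "Re (\<Sum>k\<in>UNIV. cnj (y$k) * y$k) = (\<Sum>k\<in>UNIV. (cmod (y$k))\<^sup>2)"
    by (simp add: cmod_power2 flip: power2_eq_square)
  ultimately have "(\<Sum>k\<in>UNIV. (cmod (y$k))\<^sup>2) = 0"
    by simp
  then show ?thesis
    by (simp add: y_def vec_eq_iff sum_nonneg_eq_0_iff)
qed

definition block_mat :: "'a^'n^'n \<Rightarrow> 'a^'n^'n \<Rightarrow> 'a^'n^'n \<Rightarrow> 'a^'n^'n \<Rightarrow> 'a^('n+'n)^('n+'n)"
  where "block_mat A B C D = (\<chi> i j. case (i, j) of
       (Inl a, Inl b) \<Rightarrow> A$a$b | (Inl a, Inr b) \<Rightarrow> B$a$b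
     | (Inr a, Inl b) \<Rightarrow> C$a$b | (Inr a, Inr b) \<Rightarrow> D$a$b)"

lemma block_mat_mult:
  fixes A B C D A' B' C' D' :: "'a::semiring_1^'n^'n"
  shows "block_mat A B C D ** block_mat A' B' C' D' =
    block_mat (A ** A' + B ** C') (A ** B' + B ** D') (C ** A' + D ** C') (C ** B' + D ** D')"
proof -
  have sum_Plus: "(\<Sum>k\<in>UNIV. f k) = (\<Sum>k\<in>UNIV. f (Inl k)) + (\<Sum>k\<in>UNIV. f (Inr k))"
    for f :: "'n + 'n \<Rightarrow> 'a"
    by (subst UNIV_Plus_UNIV[symmetric], subst sum.Plus) (auto simp: comp_def)
  show ?thesis
    by (simp add: matrix_matrix_mult_def block_mat_def vec_eq_iff sum_Plus split: sum.split)
qed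

lemma mat_1_eq_block_mat: "mat 1 = block_mat (mat 1) 0 0 (mat 1 :: 'a::semiring_1^'n^'n)"
  by (simp add: block_mat_def mat_def vec_eq_iff split: sum.split)

lemma block_mat_eq_iff:
  "block_mat A B C D = block_mat A' B' C' D' \<longleftrightarrow> A = A' \<and> B = B' \<and> C = C' \<and> D = D'"
proof
  assume "block_mat A B C D = block_mat A' B' C' D'"
  then have "\<forall>a b. block_mat A B C D $ Inl a $ Inl b = block_mat A' B' C' D' $ Inl a $ Inl b \<and>
     block_mat A B C D $ Inl a $ Inr b = block_mat A' B' C' D' $ Inl a $ Inr b \<and>
     block_mat A B C D $ Inr a $ Inl b = block_mat A' B' C' D' $ Inr a $ Inl b \<and>
     block_mat A B C D $ Inr a $ Inr b = block_mat A' B' C' D' $ Inr a $ Inr b"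
    by simp
  then show "A = A' \<and> B = B' \<and> C = C' \<and> D = D'"
    by (simp add: block_mat_def vec_eq_iff)
qed simp

lemma block_left_inverse_imp_right_inverse:
  fixes X1 X2 X3 X4 Y1 Y2 Y3 Y4 :: "'a::field^'n^'n"
  assumes "Y1 ** X1 + Y2 ** X3 = mat 1" "Y1 ** X2 + Y2 ** X4 = 0"
    and "Y3 ** X1 + Y4 ** X3 = 0" "Y3 ** X2 + Y4 ** X4 = mat 1"
  shows "X1 ** Y1 + X2 ** Y3 = mat 1" "X1 ** Y2 + X2 ** Y4 = 0"
    and "X3 ** Y1 + X4 ** Y3 = 0" "X3 ** Y2 + X4 ** Y4 = mat 1"
proof -
  have "block_mat Y1 Y2 Y3 Y4 ** block_mat X1 X2 X3 X4 = mat 1"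
    using assms by (simp add: block_mat_mult mat_1_eq_block_mat)
  then have "block_mat X1 X2 X3 X4 ** block_mat Y1 Y2 Y3 Y4 = mat 1"
    using matrix_left_right_inverse by blast
  then have "block_mat (X1 ** Y1 + X2 ** Y3) (X1 ** Y2 + X2 ** Y4) (X3 ** Y1 + X4 ** Y3)
      (X3 ** Y2 + X4 ** Y4) = block_mat (mat 1) 0 0 (mat 1)"
    by (simp add: block_mat_mult flip: mat_1_eq_block_mat)
  then show "X1 ** Y1 + X2 ** Y3 = mat 1" "X1 ** Y2 + X2 ** Y4 = 0"
    and "X3 ** Y1 + X4 ** Y3 = 0" "X3 ** Y2 + X4 ** Y4 = mat 1"
    by (simp_all add: block_mat_eq_iff)
qed

definition wronskian ::
  "complex^'n^'n \<Rightarrow> complex^'n^'n \<Rightarrow> complex^'n^'n \<Rightarrow> complex^'n^'n \<Rightarrow> complex^'n^'n"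
  where "wronskian Y Y' Z Z' = adj Y ** Z' - adj Y' ** Z"

lemma adj_wronskian: "adj (wronskian Y Y' Z Z') = - wronskian Z Z' Y Y'"
  by (simp add: wronskian_def adj_matrix_mult)

lemma norm_matrix_power2:
  "(norm A)\<^sup>2 = (\<Sum>i\<in>UNIV. \<Sum>j\<in>UNIV. (cmod (A $ i $ j))\<^sup>2)" for A :: "complex^'n^'m"
  by (simp add: norm_vec_def L2_set_def sum_nonneg)

lemma norm_adj [simp]: "norm (adj A) = norm A" for A :: "complex^'n^'m"
proof -
  have "(norm (adj A))\<^sup>2 = (norm A)\<^sup>2"
    unfolding norm_matrix_power2 by (subst sum.swap) (simp add: adj_def)
  then show ?thesis
    by (simp add: power2_eq_iff_nonneg)
qed

lemma norm_scale_mat [simp]: "norm (c *\<^sub>M A) = cmod c * norm A"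
proof -
  have "(norm (c *\<^sub>M A))\<^sup>2 = (cmod c * norm A)\<^sup>2"
    unfolding power_mult_distrib norm_matrix_power2
    by (simp add: norm_mult power_mult_distrib sum_distrib_left)
  then show ?thesis
    by (simp add: power2_eq_iff_nonneg)
qed

lemma norm_matrix_mult_le: "norm (A ** B) \<le> norm A * norm B"
  for A :: "complex^'k^'m" and B :: "complex^'n^'k"
proof -
  have entry: "(cmod ((A ** B) $ i $ j))\<^sup>2
      \<le> (\<Sum>k\<in>UNIV. (cmod (A $ i $ k))\<^sup>2) * (\<Sum>k\<in>UNIV. (cmod (B $ k $ j))\<^sup>2)" for i j
  proof -
    have "cmod ((A ** B) $ i $ j) \<le> (\<Sum>k\<in>UNIV. \<bar>cmod (A $ i $ k)\<bar> * \<bar>cmod (B $ k $ j)\<bar>)"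
      unfolding matrix_matrix_mult_def by (auto intro: sum_norm_le simp: norm_mult)
    also have "\<dots> \<le> L2_set (\<lambda>k. cmod (A $ i $ k)) UNIV * L2_set (\<lambda>k. cmod (B $ k $ j)) UNIV"
      by (rule L2_set_mult_ineq)
    finally have "cmod ((A ** B) $ i $ j) \<le> sqrt ((\<Sum>k\<in>UNIV. (cmod (A $ i $ k))\<^sup>2)
        * (\<Sum>k\<in>UNIV. (cmod (B $ k $ j))\<^sup>2))"
      by (simp add: L2_set_def real_sqrt_mult)
    from power_mono[OF this norm_ge_zero, of 2] show ?thesis
      by (simp add: sum_nonneg)
  qed
  have "(norm (A ** B))\<^sup>2
      \<le> (\<Sum>i\<in>UNIV. \<Sum>j\<in>UNIV. (\<Sum>k\<in>UNIV. (cmod (A $ i $ k))\<^sup>2) * (\<Sum>k\<in>UNIV. (cmod (B $ k $ j))\<^sup>2))"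
    unfolding norm_matrix_power2 by (intro sum_mono entry)
  also have "\<dots> = (norm A * norm B)\<^sup>2"
    unfolding power_mult_distrib norm_matrix_power2
    by (subst (2) sum.swap) (simp add: sum_product)
  finally show ?thesis
    by (simp add: power2_le_iff_abs_le)
qed

lemma bounded_bilinear_matrix_mult:
  "bounded_bilinear (\<lambda>(A :: complex^'k^'m) (B :: complex^'n^'k). A ** B)"
proof (rule bounded_bilinear.intro)
  show "\<exists>K. \<forall>A B. norm (A ** B) \<le> norm A * norm (B :: complex^'n^'k) * K"
    using norm_matrix_mult_le by (metis mult.right_neutral)
qed (simp_all add: matrix_add_ldistrib matrix_mult_rdistrib scalar_matrix_assoc matrix_scalar_ac)

lemma bounded_linear_adj: "bounded_linear (adj :: complex^'n^'m \<Rightarrow> complex^'m^'n)"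
  by (rule bounded_linear_intro[where K = 1]) (simp_all add: adj_scaleR)

section \<open>Recovering the boundary condition from the data at zero\<close>

lemma unitary_eq_cayley_transform:
  fixes U Y Y' :: "complex^'n^'n"
  assumes unitary: "adj U ** U = mat 1"
    and cayley: "adj U ** (Y - \<i> *\<^sub>M Y') = Y + \<i> *\<^sub>M Y'"
    and ker: "\<And>v. Y *v v = 0 \<Longrightarrow> Y' *v v = 0 \<Longrightarrow> v = 0"
  shows "invertible (Y + \<i> *\<^sub>M Y')" and "U = (Y - \<i> *\<^sub>M Y') ** matrix_inv (Y + \<i> *\<^sub>M Y')"
proof -
  have "U ** adj U = mat 1"
    using unitary matrix_left_right_inverse by blast
  then have minus: "Y - \<i> *\<^sub>M Y' = U ** (Y + \<i> *\<^sub>M Y')"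
    by (metis cayley matrix_mul_assoc matrix_mul_lid)
  show inv: "invertible (Y + \<i> *\<^sub>M Y')"
  proof (rule invertible_if_ker_trivial)
    fix v assume plus_v: "(Y + \<i> *\<^sub>M Y') *v v = 0"
    then have "(Y - \<i> *\<^sub>M Y') *v v = 0"
      by (simp add: minus flip: matrix_vector_mul_assoc)
    with plus_v have "Y *v v + \<i> *s (Y' *v v) = 0" "Y *v v - \<i> *s (Y' *v v) = 0"
      by (simp_all add: matrix_vector_mult_add_rdistrib matrix_vector_mult_diff_rdistrib
          scale_mat_vector_mult)
    then have "Y *v v = 0" "Y' *v v = 0"
      by (simp_all add: vec_eq_iff)
    then show "v = 0"
      by (rule ker)
  qed
  show "U = (Y - \<i> *\<^sub>M Y') ** matrix_inv (Y + \<i> *\<^sub>M Y')"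
    by (simp add: minus matrix_mult_matrix_inv[OF inv] flip: matrix_mul_assoc)
qed

(* P, P', R, R' stand for F(0,k), F_x(0,k), F(0,-k), F_x(0,-k). *)
locale jost_boundary_data =
  fixes P P' R R' :: "complex^'n^'n" and k :: real
  assumes k_nonzero: "k \<noteq> 0"
    and wronskian_P: "wronskian P P' P P' = mat (2 * \<i> * k)"
    and wronskian_R: "wronskian R R' R R' = mat (- 2 * \<i> * k)"
    and wronskian_R_P: "wronskian R R' P P' = 0"
begin

lemma wronskian_P_R: "wronskian P P' R R' = 0"
  using arg_cong[OF wronskian_R_P, of adj] by (simp add: adj_wronskian)

(* The Wronskian identities give a left inverse of [[P, R], [P', R']]; these are the entries of
   the product in the other order. *)
lemma dual_wronskian_identities:
  shows "R ** adj R' - P ** adj P' = mat (2 * \<i> * k)"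
    and "P ** adj P - R ** adj R = 0"
    and "R' ** adj R' - P' ** adj P' = 0"
    and "P' ** adj P - R' ** adj R = mat (2 * \<i> * k)"
proof -
  define c where "c = inverse (2 * \<i> * complex_of_real k)"
  have c: "c * (2 * \<i> * k) = 1"
    unfolding c_def by (rule left_inverse) (use k_nonzero in simp)
  have W: "adj P ** P' = adj P' ** P + mat (2 * \<i> * k)" "adj R ** R' = adj R' ** R - mat (2 * \<i> * k)"
    "adj P ** R' = adj P' ** R" "adj R ** P' = adj R' ** P"
    using wronskian_P wronskian_R wronskian_P_R wronskian_R_P
    by (simp_all add: wronskian_def algebra_simps)
  have "(- c *\<^sub>M adj P') ** P + (c *\<^sub>M adj P) ** P' = mat 1"
    and "(- c *\<^sub>M adj P') ** R + (c *\<^sub>M adj P) ** R' = 0"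
    and "(c *\<^sub>M adj R') ** P + (- c *\<^sub>M adj R) ** P' = 0"
    and "(c *\<^sub>M adj R') ** R + (- c *\<^sub>M adj R) ** R' = mat 1"
    using c by (simp_all add: W scale_mat_distribs)
  from block_left_inverse_imp_right_inverse[OF this]
  have "P ** (- c *\<^sub>M adj P') + R ** (c *\<^sub>M adj R') = mat 1"
    and "P ** (c *\<^sub>M adj P) + R ** (- c *\<^sub>M adj R) = 0"
    and "P' ** (- c *\<^sub>M adj P') + R' ** (c *\<^sub>M adj R') = 0"
    and "P' ** (c *\<^sub>M adj P) + R' ** (- c *\<^sub>M adj R) = mat 1"
    by simp_all
  then have "c *\<^sub>M (R ** adj R' - P ** adj P') = mat 1"
    and "c *\<^sub>M (P ** adj P - R ** adj R) = 0"
    and "c *\<^sub>M (R' ** adj R' - P' ** adj P') = 0"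
    and "c *\<^sub>M (P' ** adj P - R' ** adj R) = mat 1"
    by (simp_all add: scale_mat_distribs algebra_simps)
  then show "R ** adj R' - P ** adj P' = mat (2 * \<i> * k)"
    and "P ** adj P - R ** adj R = 0"
    and "R' ** adj R' - P' ** adj P' = 0"
    and "P' ** adj P - R' ** adj R = mat (2 * \<i> * k)"
    by (simp_all add: scale_mat_eq_iff_eq_scale_mat[OF c])
qed

lemma combination_eq_zero:
  assumes "P *v x + R *v y = 0" and "P' *v x + R' *v y = 0"
  shows "x = 0" and "y = 0"
proof -
  have "adj P *v (P' *v x + R' *v y) - adj P' *v (P *v x + R *v y)
      = wronskian P P' P P' *v x + wronskian P P' R R' *v y"
    and "adj R *v (P' *v x + R' *v y) - adj R' *v (P *v x + R *v y)
      = wronskian R R' P P' *v x + wronskian R R' R R' *v y"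
    by (simp_all add: wronskian_def algebra_simps matrix_vector_mul_assoc)
  then have "(2 * \<i> * k) *s x = 0" and "(- 2 * \<i> * k) *s y = 0"
    using assms by (simp_all add: wronskian_P wronskian_R wronskian_P_R wronskian_R_P)
  then show "x = 0" and "y = 0"
    using k_nonzero by (simp_all add: vec_eq_iff)
qed

end

locale jost_boundary_problem = jost_boundary_data P P' R R' k
  for P P' R R' :: "complex^'n^'n" and k +
  fixes U :: "complex^'n^'n"
  assumes U_unitary: "adj U ** U = mat 1"
begin

definition A :: "complex^'n^'n" where "A = mat (1/2) ** (U + mat 1)"
definition B :: "complex^'n^'n" where "B = mat (\<i>/2) ** (U - mat 1)"

(* boundary_form Y Y' = 0 is the boundary condition (i/2)(U^* - I) Y + (1/2)(U^* + I) Y' = 0. *)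
definition boundary_form :: "complex^'n^'n \<Rightarrow> complex^'n^'n \<Rightarrow> complex^'n^'n"
  where "boundary_form Y Y' = adj B ** Y - adj A ** Y'"

definition scattering_matrix :: "complex^'n^'n"
  where "scattering_matrix = - ((adj P ** B - adj P' ** A) ** matrix_inv (adj R ** B - adj R' ** A))"

definition Psi :: "complex^'n^'n" where "Psi = R + P ** scattering_matrix"
definition Psi' :: "complex^'n^'n" where "Psi' = R' + P' ** scattering_matrix"

lemma adj_boundary_form: "adj (boundary_form Y Y') = adj Y ** B - adj Y' ** A"
  by (simp add: boundary_form_def adj_matrix_mult)

lemma adj_B_mult_A: "adj B ** A = adj A ** B"
  using U_unitary by (simp add: A_def B_def scale_mat_distribs matrix_mult_distribs algebra_simps)

lemma boundary_form_gram:
  "boundary_form P P' ** adj (boundary_form P P') = boundary_form R R' ** adj (boundary_form R R')"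
proof -
  have "boundary_form P P' ** adj (boundary_form P P') - boundary_form R R' ** adj (boundary_form R R')
      = adj B ** (P ** adj P - R ** adj R) ** B - adj B ** (P ** adj P' - R ** adj R') ** A
        - adj A ** (P' ** adj P - R' ** adj R) ** B + adj A ** (P' ** adj P' - R' ** adj R') ** A"
    by (simp add: boundary_form_def adj_matrix_mult matrix_mult_distribs matrix_mul_assoc
        algebra_simps)
  also have "\<dots> = (2 * \<i> * k) *\<^sub>M (adj B ** A - adj A ** B)"
    using dual_wronskian_identities by (simp add: scale_mat_distribs matrix_mult_distribs
        flip: minus_diff_eq[of "R ** adj R'"] minus_diff_eq[of "R' ** adj R'"])
  finally show ?thesis
    by (simp add: adj_B_mult_A)
qed

lemma invertible_adj_boundary_form: "invertible (adj (boundary_form R R'))"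
proof (rule invertible_if_ker_trivial)
  fix w assume Rw: "adj (boundary_form R R') *v w = 0"
  then have "(boundary_form P P' ** adj (boundary_form P P')) *v w = 0"
    by (simp add: boundary_form_gram flip: matrix_vector_mul_assoc)
  then have Pw: "adj (boundary_form P P') *v w = 0"
    using matrix_vector_mult_eq_zero_if_gram[of "adj (boundary_form P P')"] by simp
  define x y where "x = A *v w" and "y = B *v w"
  have "adj P *v y - adj P' *v x = 0" "adj R *v y - adj R' *v x = 0"
    using Pw Rw by (simp_all add: x_def y_def boundary_form_def adj_matrix_mult
        matrix_vector_mult_diff_rdistrib matrix_vector_mul_assoc)
  then have "P *v (adj P *v y - adj P' *v x) - R *v (adj R *v y - adj R' *v x) = 0"
    and "P' *v (adj P *v y - adj P' *v x) - R' *v (adj R *v y - adj R' *v x) = 0"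
    by simp_all
  then have "(P ** adj P - R ** adj R) *v y + (R ** adj R' - P ** adj P') *v x = 0"
    and "(P' ** adj P - R' ** adj R) *v y + (R' ** adj R' - P' ** adj P') *v x = 0"
    by (simp_all add: algebra_simps matrix_vector_mul_assoc)
  then have "x = 0" "y = 0"
    using k_nonzero by (simp_all add: dual_wronskian_identities vec_eq_iff)
  have "A + \<i> *\<^sub>M B = mat 1"
    by (simp add: A_def B_def scale_mat_distribs)
  then have "w = x + \<i> *s y"
    by (metis (no_types) x_def y_def matrix_vector_mul_lid matrix_vector_mult_add_rdistrib
        scale_mat_vector_mult)
  with \<open>x = 0\<close> \<open>y = 0\<close> show "w = 0"
    by simp
qed

lemma boundary_form_Psi: "boundary_form Psi Psi' = 0"
proof -
  let ?MP = "adj (boundary_form P P')" and ?MR = "adj (boundary_form R R')"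
  have "boundary_form Psi Psi' = boundary_form R R' + boundary_form P P' ** scattering_matrix"
    by (simp add: boundary_form_def Psi_def Psi'_def matrix_mult_distribs matrix_mul_assoc)
  also have "boundary_form P P' ** scattering_matrix
      = - (boundary_form P P' ** ?MP) ** matrix_inv ?MR"
    by (simp add: scattering_matrix_def matrix_mul_assoc flip: adj_boundary_form)
  also have "\<dots> = - boundary_form R R'"
    by (simp add: boundary_form_gram matrix_mult_matrix_inv[OF invertible_adj_boundary_form]
        flip: matrix_mul_assoc)
  finally show ?thesis
    by simp
qed

lemma cayley_identity_if_boundary_condition:
  assumes "boundary_form Y Y' = 0"
  shows "adj U ** (Y - \<i> *\<^sub>M Y') = Y + \<i> *\<^sub>M Y'"
proof -
  have "(2 * \<i>) *\<^sub>M boundary_form Y Y' = adj U ** (Y - \<i> *\<^sub>M Y') - (Y + \<i> *\<^sub>M Y')"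
    by (simp add: boundary_form_def A_def B_def scale_mat_distribs matrix_mult_distribs
        algebra_simps)
  with assms show ?thesis
    by simp
qed

lemma U_eq_cayley_transform_Psi:
  "invertible (Psi + mat \<i> ** Psi') \<and> U = (Psi - mat \<i> ** Psi') ** matrix_inv (Psi + mat \<i> ** Psi')"
proof -
  have "v = 0" if "Psi *v v = 0" "Psi' *v v = 0" for v
    using combination_eq_zero(2)[of "scattering_matrix *v v" v] that
    by (simp add: Psi_def Psi'_def matrix_vector_mult_add_rdistrib matrix_vector_mul_assoc
        add.commute)
  then show ?thesis
    using unitary_eq_cayley_transform[OF U_unitary
        cayley_identity_if_boundary_condition[OF boundary_form_Psi]]
    by simp
qed

end

section \<open>Wronskians of solutions in integrated form\<close>

lemma norm_diff_le_if_uniformly_locally_dominated: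
  fixes f :: "real \<Rightarrow> 'a::real_normed_vector" and g :: "real \<Rightarrow> real"
  assumes "a \<le> b" and "\<delta> > 0"
    and local: "\<And>s t. a \<le> s \<Longrightarrow> s \<le> t \<Longrightarrow> t \<le> b \<Longrightarrow> t - s < \<delta> \<Longrightarrow> norm (f t - f s) \<le> g t - g s"
  shows "norm (f b - f a) \<le> g b - g a"
proof -
  have "a \<le> a \<longrightarrow> b \<le> b \<longrightarrow> norm (f b - f a) \<le> g b - g a"
  proof (rule Bolzano[OF \<open>a \<le> b\<close>, where P = "\<lambda>s t. a \<le> s \<longrightarrow> t \<le> b \<longrightarrow> norm (f t - f s) \<le> g t - g s"])
    fix s u t :: real
    assume "s \<le> u" "u \<le> t"
      and "a \<le> s \<longrightarrow> u \<le> b \<longrightarrow> norm (f u - f s) \<le> g u - g s"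
      and "a \<le> u \<longrightarrow> t \<le> b \<longrightarrow> norm (f t - f u) \<le> g t - g u"
    moreover have "norm (f t - f s) \<le> norm (f t - f u) + norm (f u - f s)"
      by (rule norm_diff_triangle_ineq[of "f t" "f u" "f u" "f s", simplified])
    ultimately show "a \<le> s \<longrightarrow> t \<le> b \<longrightarrow> norm (f t - f s) \<le> g t - g s"
      by auto
  next
    show "\<exists>d>0. \<forall>s t. s \<le> x \<and> x \<le> t \<and> t - s < d \<longrightarrow> a \<le> s \<longrightarrow> t \<le> b \<longrightarrow>
        norm (f t - f s) \<le> g t - g s" for x
      using \<open>\<delta> > 0\<close> local by auto
  qed
  then show ?thesis
    by simp
qed

lemma norm_diff_le_if_locally_dominated:
  fixes f :: "real \<Rightarrow> 'a::real_normed_vector" and \<mu> \<rho> :: "real \<Rightarrow> real"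
  assumes "a \<le> b"
    and local: "\<And>\<epsilon>. \<epsilon> > 0 \<Longrightarrow> \<exists>\<delta>>0. \<forall>s t. a \<le> s \<longrightarrow> s \<le> t \<longrightarrow> t \<le> b \<longrightarrow> t - s < \<delta> \<longrightarrow>
        norm (f t - f s) \<le> \<mu> t - \<mu> s + \<epsilon> * (\<rho> t - \<rho> s)"
  shows "norm (f b - f a) \<le> \<mu> b - \<mu> a"
proof -
  have approx: "norm (f b - f a) \<le> \<mu> b - \<mu> a + \<epsilon> * (\<rho> b - \<rho> a)" if "\<epsilon> > 0" for \<epsilon>
  proof -
    obtain \<delta> where "\<delta> > 0" and "\<forall>s t. a \<le> s \<longrightarrow> s \<le> t \<longrightarrow> t \<le> b \<longrightarrow> t - s < \<delta> \<longrightarrow>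
        norm (f t - f s) \<le> \<mu> t - \<mu> s + \<epsilon> * (\<rho> t - \<rho> s)"
      using local[OF \<open>\<epsilon> > 0\<close>] by blast
    then show ?thesis
      using norm_diff_le_if_uniformly_locally_dominated[OF \<open>a \<le> b\<close> \<open>\<delta> > 0\<close>,
          of f "\<lambda>t. \<mu> t + \<epsilon> * \<rho> t"]
      by (simp add: algebra_simps)
  qed
  show ?thesis
  proof (cases "\<rho> b - \<rho> a \<le> 0")
    case True
    then show ?thesis
      using approx[of 1] by simp
  next
    case False
    show ?thesis
    proof (rule field_le_epsilon)
      fix e :: real assume "e > 0"
      then show "norm (f b - f a) \<le> \<mu> b - \<mu> a + e"
        using approx[of "e / (\<rho> b - \<rho> a)"] False by simp
    qed
  qed
qed

lemma continuous_on_if_has_integral_increments: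
  fixes f g :: "real \<Rightarrow> 'a::banach"
  assumes "\<And>t. a \<le> t \<Longrightarrow> t \<le> b \<Longrightarrow> (g has_integral (f t - f a)) {a..t}"
  shows "continuous_on {a..b} f"
proof (cases "a \<le> b")
  case True
  have "continuous_on {a..b} (\<lambda>t. f a + integral {a..t} g)"
    using assms[OF True order_refl]
    by (intro continuous_intros indefinite_integral_continuous_1) blast
  then show ?thesis
  proof (rule continuous_on_eq)
    fix t assume "t \<in> {a..b}"
    then show "f a + integral {a..t} g = f t"
      using integral_unique[OF assms[of t]] by simp
  qed
qed simp

lemma has_integral_increment_subinterval:
  fixes f g :: "real \<Rightarrow> 'a::banach"
  assumes increments: "\<And>t. a \<le> t \<Longrightarrow> t \<le> b \<Longrightarrow> (g has_integral (f t - f a)) {a..t}"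
    and "a \<le> s" "s \<le> t" "t \<le> b"
  shows "(g has_integral (f t - f s)) {s..t}"
proof -
  have "g integrable_on {a..t}"
    using increments[of t] \<open>a \<le> s\<close> \<open>s \<le> t\<close> \<open>t \<le> b\<close> by (auto intro: has_integral_integrable)
  then have "integral {a..s} g + integral {s..t} g = integral {a..t} g"
    and "g integrable_on {s..t}"
    using \<open>a \<le> s\<close> \<open>s \<le> t\<close>
    by (auto intro: Henstock_Kurzweil_Integration.integral_combine integrable_subinterval_real)
  moreover have "integral {a..s} g = f s - f a" "integral {a..t} g = f t - f a"
    using increments \<open>a \<le> s\<close> \<open>s \<le> t\<close> \<open>t \<le> b\<close> by (auto intro: integral_unique)
  ultimately show ?thesis
    by (metis add_diff_cancel_left' diff_diff_eq2 diff_add_cancel has_integral_integral)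
qed

lemma uniformly_continuous_on_interval:
  fixes f :: "real \<Rightarrow> 'a::real_normed_vector"
  assumes "continuous_on {a..b} f" "\<eta> > 0"
  obtains \<delta> where "\<delta> > 0" "\<And>u v. u \<in> {a..b} \<Longrightarrow> v \<in> {a..b} \<Longrightarrow> \<bar>u - v\<bar> < \<delta> \<Longrightarrow> norm (f u - f v) \<le> \<eta>"
proof -
  have "uniformly_continuous_on {a..b} f"
    using assms(1) compact_uniformly_continuous by blast
  then obtain \<delta> where "\<delta> > 0" "\<forall>u\<in>{a..b}. \<forall>v\<in>{a..b}. dist u v < \<delta> \<longrightarrow> dist (f u) (f v) < \<eta>"
    using assms(2) unfolding uniformly_continuous_on_def by metis
  then show ?thesis
    using that[of \<delta>] by (auto simp: dist_norm dist_real_def less_imp_le)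
qed

lemma wronskian_increment_eq:
  "wronskian Yt Y't Zt Z't - wronskian Ys Y's Zs Z's
    = (adj Yt ** (Z't - Z's) - adj (Y't - Y's) ** Zt)
      + (adj (Yt - Ys - h *\<^sub>R Y's) ** Z's - adj Y's ** (Zt - Zs - h *\<^sub>R Z's))"
  by (simp add: wronskian_def matrix_mult_distribs adj_scaleR matrix_scalar_ac
      flip: scalar_matrix_assoc)

lemma norm_wronskian_integrand_le:
  "norm (adj Yt ** (VZ ** Zu) - adj (VY ** Yu) ** Zt)
    \<le> norm (adj Yt ** (VZ - adj VY) ** Zt) + norm Yt * norm VZ * norm (Zu - Zt)
      + norm (Yt - Yu) * norm VY * norm Zt"
proof -
  have "adj Yt ** (VZ ** Zu) - adj (VY ** Yu) ** Zt
      = adj Yt ** (VZ - adj VY) ** Zt + adj Yt ** VZ ** (Zu - Zt) + adj (Yt - Yu) ** adj VY ** Zt"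
    by (simp add: adj_matrix_mult matrix_mult_distribs matrix_mul_assoc)
  also have "norm \<dots> \<le> norm (adj Yt ** (VZ - adj VY) ** Zt) + norm Yt * norm VZ * norm (Zu - Zt)
      + norm (Yt - Yu) * norm VY * norm Zt"
    by (intro norm_triangle_le add_mono order_refl norm_matrix_mult_le[THEN order_trans]
        mult_right_mono norm_ge_zero) (simp_all del: adj_diff)
  finally show ?thesis .
qed

lemma norm_first_order_remainder_le:
  fixes f f' :: "real \<Rightarrow> 'a::real_normed_vector"
  assumes "s \<le> t"
    and deriv: "\<And>u. u \<in> {s..t} \<Longrightarrow> (f has_vector_derivative f' u) (at u within {s..t})"
    and "\<And>u. u \<in> {s..t} \<Longrightarrow> norm (f' u - f' s) \<le> \<eta>"
  shows "norm (f t - f s - (t - s) *\<^sub>R f' s) \<le> (t - s) * \<eta>"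
  using vector_differentiable_bound_linearization[of "{s..t}" f f' s t s \<eta>] assms
  by (simp add: closed_segment_eq_real_ivl)

(* The equation Y'' = V Y in integrated form: Y' is only an indefinite integral of V Y. *)
locale integrated_solution =
  fixes a b :: real and Y Y' V :: "real \<Rightarrow> complex^'n^'n" and N :: "real \<Rightarrow> real"
  assumes le: "a \<le> b"
    and deriv: "\<And>u. u \<in> {a..b} \<Longrightarrow> (Y has_vector_derivative Y' u) (at u within {a..b})"
    and increments: "\<And>t. a \<le> t \<Longrightarrow> t \<le> b \<Longrightarrow> ((\<lambda>u. V u ** Y u) has_integral (Y' t - Y' a)) {a..t}"
    and N_integrable: "N integrable_on {a..b}"
    and norm_V_le: "\<And>u. u \<in> {a..b} \<Longrightarrow> norm (V u) \<le> N u"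
begin

lemmas continuous_on =
  continuous_on_vector_derivative[OF deriv] continuous_on_if_has_integral_increments[OF increments]

lemma N_nonneg: "u \<in> {a..b} \<Longrightarrow> 0 \<le> N u"
  using norm_V_le norm_ge_zero order_trans by blast

end

locale solution_pair = Y: integrated_solution a b Y Y' VY N + Z: integrated_solution a b Z Z' VZ N
  for a b :: real and Y Y' VY Z Z' VZ :: "real \<Rightarrow> complex^'n^'n" and N :: "real \<Rightarrow> real"
begin

abbreviation W :: "real \<Rightarrow> complex^'n^'n" where "W t \<equiv> wronskian (Y t) (Y' t) (Z t) (Z' t)"

lemma uniformly_bounded:
  obtains M where "M > 0"
    and "\<And>u. u \<in> {a..b} \<Longrightarrow> norm (Y u) \<le> M \<and> norm (Y' u) \<le> M \<and> norm (Z u) \<le> M \<and> norm (Z' u) \<le> M"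
proof -
  let ?n = "\<lambda>u. norm (Y u) + norm (Y' u) + norm (Z u) + norm (Z' u)"
  have "compact (?n ` {a..b})"
    using Y.continuous_on Z.continuous_on by (intro compact_continuous_image continuous_intros) auto
  then obtain M where "M > 0" and M: "\<And>u. u \<in> {a..b} \<Longrightarrow> norm (?n u) \<le> M"
    by (auto dest!: compact_imp_bounded simp: bounded_pos)
  show ?thesis
  proof (rule that[OF \<open>M > 0\<close>])
    fix u assume "u \<in> {a..b}"
    then have "?n u \<le> M"
      using M by fastforce
    then show "norm (Y u) \<le> M \<and> norm (Y' u) \<le> M \<and> norm (Z u) \<le> M \<and> norm (Z' u) \<le> M"
      using norm_ge_zero[of "Y u"] norm_ge_zero[of "Y' u"] norm_ge_zero[of "Z u"]
        norm_ge_zero[of "Z' u"] by linarith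
  qed
qed

lemma integrated_increment_le:
  assumes "a \<le> s" "s \<le> t" "t \<le> b" "\<eta> \<ge> 0"
    and G: "G integrable_on {a..b}"
      "\<And>u. u \<in> {s..t} \<Longrightarrow> norm (adj (Y t) ** (VZ u - adj (VY u)) ** Z t) \<le> G u"
    and close: "\<And>u. u \<in> {s..t} \<Longrightarrow> norm (Y t) * norm (Z u - Z t) + norm (Y t - Y u) * norm (Z t) \<le> \<eta>"
  shows "norm (adj (Y t) ** (Z' t - Z' s) - adj (Y' t - Y' s) ** Z t)
    \<le> integral {s..t} G + \<eta> * integral {s..t} N"
proof -
  have linear: "bounded_linear (\<lambda>X. adj (Y t) ** X)" "bounded_linear (\<lambda>X. adj X ** Z t)"
    by (rule bounded_bilinear.bounded_linear_right[OF bounded_bilinear_matrix_mult],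
        rule bounded_linear_compose[OF bounded_bilinear.bounded_linear_left bounded_linear_adj],
        rule bounded_bilinear_matrix_mult)
  have PA: "((\<lambda>u. adj (Y t) ** (VZ u ** Z u) - adj (VY u ** Y u) ** Z t)
      has_integral (adj (Y t) ** (Z' t - Z' s) - adj (Y' t - Y' s) ** Z t)) {s..t}"
    using has_integral_diff[OF
        has_integral_linear[OF has_integral_increment_subinterval[OF Z.increments assms(1-3)] linear(1)]
        has_integral_linear[OF has_integral_increment_subinterval[OF Y.increments assms(1-3)] linear(2)]]
    by (simp add: o_def)
  have bound: "((\<lambda>u. G u + \<eta> * N u) has_integral (integral {s..t} G + \<eta> * integral {s..t} N)) {s..t}"
    using integrable_subinterval_real[OF G(1)] integrable_subinterval_real[OF Y.N_integrable] assms(1-3)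
    by (intro has_integral_add has_integral_mult_right integrable_integral) auto
  have pointwise: "norm (adj (Y t) ** (VZ u ** Z u) - adj (VY u ** Y u) ** Z t) \<le> G u + \<eta> * N u"
    if "u \<in> {s..t}" for u
  proof -
    have "norm (VY u) \<le> N u" "norm (VZ u) \<le> N u"
      using that assms(1-3) Y.norm_V_le Z.norm_V_le by auto
    then have "norm (Y t) * norm (VZ u) * norm (Z u - Z t) + norm (Y t - Y u) * norm (VY u) * norm (Z t)
        \<le> norm (Y t) * N u * norm (Z u - Z t) + norm (Y t - Y u) * N u * norm (Z t)"
      by (intro add_mono mult_right_mono mult_left_mono) auto
    also have "\<dots> = N u * (norm (Y t) * norm (Z u - Z t) + norm (Y t - Y u) * norm (Z t))"
      by (simp add: algebra_simps)
    also have "\<dots> \<le> N u * \<eta>"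
      using close[OF that] \<open>norm (VY u) \<le> N u\<close> norm_ge_zero order_trans
      by (blast intro: mult_left_mono)
    finally show ?thesis
      using norm_wronskian_integrand_le[of "Y t" "VZ u" "Z u" "VY u" "Y u" "Z t"] G(2)[OF that]
      by (simp add: mult.commute)
  qed
  show ?thesis
    using integral_norm_bound_integral[OF has_integral_integrable[OF PA]
        has_integral_integrable[OF bound] pointwise]
    by (simp add: integral_unique[OF PA] integral_unique[OF bound])
qed

end

lemma integral_interval_diff:
  fixes f :: "real \<Rightarrow> 'a::banach"
  assumes "f integrable_on {a..b}" "a \<le> s" "s \<le> t" "t \<le> b"
  shows "integral {a..t} f - integral {a..s} f = integral {s..t} f"
  using Henstock_Kurzweil_Integration.integral_combine[of a s t f]
    integrable_subinterval_real[OF assms(1), of a t] assms(2-4)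
  by (simp add: algebra_simps)

context solution_pair
begin

lemma uniformly_close:
  assumes "\<eta> > 0"
  obtains \<delta> where "\<delta> > 0"
    and "\<And>u v. u \<in> {a..b} \<Longrightarrow> v \<in> {a..b} \<Longrightarrow> \<bar>u - v\<bar> < \<delta> \<Longrightarrow>
      norm (Y u - Y v) \<le> \<eta> \<and> norm (Y' u - Y' v) \<le> \<eta> \<and> norm (Z u - Z v) \<le> \<eta> \<and> norm (Z' u - Z' v) \<le> \<eta>"
proof -
  define H where "H u = ((Y u, Y' u), (Z u, Z' u))" for u
  have "continuous_on {a..b} H"
    unfolding H_def using Y.continuous_on Z.continuous_on by (intro continuous_on_Pair) auto
  then obtain \<delta> where "\<delta> > 0"
    and \<delta>: "\<And>u v. u \<in> {a..b} \<Longrightarrow> v \<in> {a..b} \<Longrightarrow> \<bar>u - v\<bar> < \<delta> \<Longrightarrow> norm (H u - H v) \<le> \<eta>"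
    using uniformly_continuous_on_interval[OF _ assms] by blast
  show ?thesis
  proof (rule that[OF \<open>\<delta> > 0\<close>])
    fix u v assume "u \<in> {a..b}" "v \<in> {a..b}" "\<bar>u - v\<bar> < \<delta>"
    then have "norm (((Y u - Y v, Y' u - Y' v), (Z u - Z v, Z' u - Z' v))) \<le> \<eta>"
      using \<delta> by (simp add: H_def)
    then show "norm (Y u - Y v) \<le> \<eta> \<and> norm (Y' u - Y' v) \<le> \<eta>
        \<and> norm (Z u - Z v) \<le> \<eta> \<and> norm (Z' u - Z' v) \<le> \<eta>"
      by (meson norm_fst_le norm_snd_le order_trans)
  qed
qed

lemma remainder_increment_le:
  assumes "a \<le> s" "s \<le> t" "t \<le> b"
    and M: "\<And>u. u \<in> {a..b} \<Longrightarrow> norm (Y' u) \<le> M \<and> norm (Z' u) \<le> M"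
    and close: "\<And>u. u \<in> {s..t} \<Longrightarrow> norm (Y' u - Y' s) \<le> \<eta> \<and> norm (Z' u - Z' s) \<le> \<eta>"
  shows "norm (adj (Y t - Y s - (t - s) *\<^sub>R Y' s) ** Z' s - adj (Y' s) ** (Z t - Z s - (t - s) *\<^sub>R Z' s))
    \<le> 2 * M * \<eta> * (t - s)"
proof -
  have sub: "{s..t} \<subseteq> {a..b}"
    using assms(1-3) by auto
  have "(Y has_vector_derivative Y' u) (at u within {s..t})"
    and "(Z has_vector_derivative Z' u) (at u within {s..t})" if "u \<in> {s..t}" for u
    using has_vector_derivative_within_subset[OF Y.deriv sub]
      has_vector_derivative_within_subset[OF Z.deriv sub] that sub
    by auto
  then have "norm (Y t - Y s - (t - s) *\<^sub>R Y' s) \<le> (t - s) * \<eta>"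
    and "norm (Z t - Z s - (t - s) *\<^sub>R Z' s) \<le> (t - s) * \<eta>"
    using close by (auto intro!: norm_first_order_remainder_le[OF \<open>s \<le> t\<close>])
  moreover have "norm (Y' s) \<le> M" "norm (Z' s) \<le> M" "0 \<le> \<eta>"
    using M[of s] close[of s] assms(1-3) by auto
  moreover have "0 \<le> M"
    using order_trans[OF norm_ge_zero \<open>norm (Y' s) \<le> M\<close>] .
  ultimately have "norm (Y t - Y s - (t - s) *\<^sub>R Y' s) * norm (Z' s)
      + norm (Y' s) * norm (Z t - Z s - (t - s) *\<^sub>R Z' s) \<le> (t - s) * \<eta> * M + M * ((t - s) * \<eta>)"
    using assms(2) by (intro add_mono mult_mono) auto
  moreover have "norm (adj (Y t - Y s - (t - s) *\<^sub>R Y' s) ** Z' s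
      - adj (Y' s) ** (Z t - Z s - (t - s) *\<^sub>R Z' s))
    \<le> norm (Y t - Y s - (t - s) *\<^sub>R Y' s) * norm (Z' s)
      + norm (Y' s) * norm (Z t - Z s - (t - s) *\<^sub>R Z' s)"
    by (rule order_trans[OF norm_triangle_ineq4 add_mono]) (metis norm_adj norm_matrix_mult_le)+
  ultimately show ?thesis
    by (simp add: algebra_simps)
qed

lemma local_increment_le:
  assumes G: "G integrable_on {a..b}"
      "\<And>u t. u \<in> {a..b} \<Longrightarrow> t \<in> {a..b} \<Longrightarrow> norm (adj (Y t) ** (VZ u - adj (VY u)) ** Z t) \<le> G u"
    and "\<epsilon> > 0"
  obtains \<delta> where "\<delta> > 0"
    and "\<And>s t. a \<le> s \<Longrightarrow> s \<le> t \<Longrightarrow> t \<le> b \<Longrightarrow> t - s < \<delta> \<Longrightarrow>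
      norm (W t - W s) \<le> integral {s..t} G + \<epsilon> * (t - s + integral {s..t} N)"
proof -
  obtain M where "M > 0" and M: "\<And>u. u \<in> {a..b} \<Longrightarrow>
      norm (Y u) \<le> M \<and> norm (Y' u) \<le> M \<and> norm (Z u) \<le> M \<and> norm (Z' u) \<le> M"
    using uniformly_bounded by blast
  define \<eta> where "\<eta> = \<epsilon> / (4 * M)"
  have "\<eta> > 0" and \<eta>: "2 * M * \<eta> = \<epsilon> / 2"
    using \<open>\<epsilon> > 0\<close> \<open>M > 0\<close> by (simp_all add: \<eta>_def)
  obtain \<delta> where "\<delta> > 0" and \<delta>: "\<And>u v. u \<in> {a..b} \<Longrightarrow> v \<in> {a..b} \<Longrightarrow> \<bar>u - v\<bar> < \<delta> \<Longrightarrow>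
      norm (Y u - Y v) \<le> \<eta> \<and> norm (Y' u - Y' v) \<le> \<eta> \<and> norm (Z u - Z v) \<le> \<eta> \<and> norm (Z' u - Z' v) \<le> \<eta>"
    using uniformly_close[OF \<open>\<eta> > 0\<close>] by blast
  show ?thesis
  proof (rule that[OF \<open>\<delta> > 0\<close>])
    fix s t assume st: "a \<le> s" "s \<le> t" "t \<le> b" and "t - s < \<delta>"
    then have close: "norm (Y u - Y v) \<le> \<eta> \<and> norm (Y' u - Y' v) \<le> \<eta>
        \<and> norm (Z u - Z v) \<le> \<eta> \<and> norm (Z' u - Z' v) \<le> \<eta>"
      if "u \<in> {s..t}" "v \<in> {s..t}" for u v
      using that \<delta>[of u v] by (auto simp: abs_real_def)
    have PA: "norm (adj (Y t) ** (Z' t - Z' s) - adj (Y' t - Y' s) ** Z t)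
        \<le> integral {s..t} G + \<epsilon> / 2 * integral {s..t} N"
    proof (rule integrated_increment_le[OF st _ G(1)])
      fix u assume u: "u \<in> {s..t}"
      then have "norm (Y t) * norm (Z u - Z t) \<le> M * \<eta>" "norm (Y t - Y u) * norm (Z t) \<le> \<eta> * M"
        using M[of t] close[OF u, of t] close[of t u] st \<open>M > 0\<close> \<open>\<eta> > 0\<close> by (auto intro!: mult_mono)
      then show "norm (Y t) * norm (Z u - Z t) + norm (Y t - Y u) * norm (Z t) \<le> \<epsilon> / 2"
        using \<eta> mult.commute[of \<eta> M] by linarith
    qed (use G(2) st \<open>\<epsilon> > 0\<close> in auto)
    have PB: "norm (adj (Y t - Y s - (t - s) *\<^sub>R Y' s) ** Z' s
        - adj (Y' s) ** (Z t - Z s - (t - s) *\<^sub>R Z' s)) \<le> \<epsilon> / 2 * (t - s)"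
      using remainder_increment_le[OF st, of M \<eta>] M close st by (simp add: \<eta>)
    have "norm (W t - W s) \<le> integral {s..t} G + \<epsilon> / 2 * integral {s..t} N + \<epsilon> / 2 * (t - s)"
      unfolding wronskian_increment_eq[of "Y t" "Y' t" "Z t" "Z' t" "Y s" "Y' s" "Z s" "Z' s" "t - s"]
      by (rule norm_triangle_le[OF add_mono[OF PA PB]])
    moreover have "0 \<le> \<epsilon> / 2 * (t - s + integral {s..t} N)"
      using st \<open>\<epsilon> > 0\<close> integral_nonneg[OF integrable_subinterval_real[OF Y.N_integrable], of s t]
        Y.N_nonneg by auto
    moreover have "\<epsilon> * (t - s + integral {s..t} N)
        = \<epsilon> / 2 * integral {s..t} N + \<epsilon> / 2 * (t - s) + \<epsilon> / 2 * (t - s + integral {s..t} N)"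
      by (simp add: field_simps)
    ultimately show "norm (W t - W s) \<le> integral {s..t} G + \<epsilon> * (t - s + integral {s..t} N)"
      by linarith
  qed
qed

theorem wronskian_variation_le:
  assumes G: "G integrable_on {a..b}"
      "\<And>u t. u \<in> {a..b} \<Longrightarrow> t \<in> {a..b} \<Longrightarrow> norm (adj (Y t) ** (VZ u - adj (VY u)) ** Z t) \<le> G u"
  shows "norm (W b - W a) \<le> integral {a..b} G"
proof -
  have "norm (W b - W a) \<le> integral {a..b} G - integral {a..a} G"
  proof (rule norm_diff_le_if_locally_dominated[OF Y.le, where \<rho> = "\<lambda>t. t + integral {a..t} N"])
    fix \<epsilon> :: real assume "\<epsilon> > 0"
    then obtain \<delta> where "\<delta> > 0" and \<delta>: "\<And>s t. a \<le> s \<Longrightarrow> s \<le> t \<Longrightarrow> t \<le> b \<Longrightarrow> t - s < \<delta> \<Longrightarrow>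
        norm (W t - W s) \<le> integral {s..t} G + \<epsilon> * (t - s + integral {s..t} N)"
      using local_increment_le[OF G] by blast
    show "\<exists>\<delta>>0. \<forall>s t. a \<le> s \<longrightarrow> s \<le> t \<longrightarrow> t \<le> b \<longrightarrow> t - s < \<delta> \<longrightarrow> norm (W t - W s)
        \<le> integral {a..t} G - integral {a..s} G + \<epsilon> * (t + integral {a..t} N - (s + integral {a..s} N))"
    proof (intro exI[of _ \<delta>] conjI allI impI)
      fix s t assume st: "a \<le> s" "s \<le> t" "t \<le> b" "t - s < \<delta>"
      have "integral {a..t} G - integral {a..s} G = integral {s..t} G"
        and "t + integral {a..t} N - (s + integral {a..s} N) = t - s + integral {s..t} N"
        using integral_interval_diff[OF G(1) st(1-3)] integral_interval_diff[OF Y.N_integrable st(1-3)]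
        by simp_all
      then show "norm (W t - W s) \<le> integral {a..t} G - integral {a..s} G
          + \<epsilon> * (t + integral {a..t} N - (s + integral {a..s} N))"
        using \<delta>[OF st] by (simp only:)
    qed (fact \<open>\<delta> > 0\<close>)
  qed
  then show ?thesis
    by simp
qed

end

section \<open>Tools for limits at infinity\<close>

lemma bounded_linear_mat: "bounded_linear (mat :: complex \<Rightarrow> complex^'n^'n)"
proof (rule bounded_linear_intro[where K = "norm (mat 1 :: complex^'n^'n)"])
  show "norm (mat c :: complex^'n^'n) \<le> norm c * norm (mat 1 :: complex^'n^'n)" for c
    using norm_scale_mat[of c "mat 1 :: complex^'n^'n"] by simp
qed (auto simp: mat_def vec_eq_iff)

lemma norm_mat: "norm (mat c :: complex^'n^'n) = cmod c * norm (mat 1 :: complex^'n^'n)"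
  using norm_scale_mat[of c "mat 1 :: complex^'n^'n"] by simp

lemma tendsto_scale_mat_zero:
  fixes X :: "'a \<Rightarrow> complex^'n^'m"
  assumes "(X \<longlongrightarrow> 0) F" and "\<And>x. cmod (c x) \<le> B"
  shows "((\<lambda>x. c x *\<^sub>M X x) \<longlongrightarrow> 0) F"
proof (rule Lim_null_comparison)
  show "\<forall>\<^sub>F x in F. norm (c x *\<^sub>M X x) \<le> B * norm (X x)"
    using assms(2) by (intro always_eventually allI) (simp add: mult_right_mono)
  show "((\<lambda>x. B * norm (X x)) \<longlongrightarrow> 0) F"
    using tendsto_mult_right_zero[OF tendsto_norm_zero[OF assms(1)]] by simp
qed

lemma cmod_exp_i_real [simp]: "cmod (exp (\<i> * complex_of_real k * complex_of_real x)) = 1"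
  by (simp add: norm_exp_eq_Re)

lemma oscillation_tendsto_zero_imp_zero:
  fixes P R :: "complex^'n^'m" and \<theta> :: real
  defines "e \<equiv> \<lambda>x::real. exp (\<i> * complex_of_real \<theta> * complex_of_real x)"
  assumes "\<theta> \<noteq> 0" and lim: "((\<lambda>x. e x *\<^sub>M P - inverse (e x) *\<^sub>M R) \<longlongrightarrow> 0) at_top"
  shows "P = 0" and "R = 0"
proof -
  \<comment> \<open>The shift x \<mapsto> x + pi / (2 \<theta>) turns e P - R / e into i (e P + R / e).\<close>
  define s where "s = pi / (2 * \<theta>)"
  have e_shift: "e (x + s) = \<i> * e x" for x
  proof -
    have "\<i> * complex_of_real \<theta> * complex_of_real (x + s) = \<i> * complex_of_real \<theta> * complex_of_real x
        + \<i> * complex_of_real (pi / 2)"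
      using \<open>\<theta> \<noteq> 0\<close> by (simp add: s_def field_simps)
    moreover have "exp (\<i> * complex_of_real (pi / 2)) = \<i>"
      by (metis cis_conv_exp cis_pi_half)
    ultimately show ?thesis
      unfolding e_def by (simp only: exp_add mult.commute)
  qed
  have "((\<lambda>x. e (x + s) *\<^sub>M P - inverse (e (x + s)) *\<^sub>M R) \<longlongrightarrow> 0) at_top"
    using filterlim_compose[OF lim filterlim_tendsto_add_at_top[OF tendsto_const[of s] filterlim_ident]]
    by (simp add: add.commute)
  then have "((\<lambda>x. (- \<i>) *\<^sub>M (e (x + s) *\<^sub>M P - inverse (e (x + s)) *\<^sub>M R)) \<longlongrightarrow> 0) at_top"
    by (rule tendsto_scale_mat_zero[where B = 1]) simp
  then have plus: "((\<lambda>x. e x *\<^sub>M P + inverse (e x) *\<^sub>M R) \<longlongrightarrow> 0) at_top"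
    by (simp add: e_shift scale_mat_distribs)
  have "((\<lambda>x. inverse (2 * e x) *\<^sub>M ((e x *\<^sub>M P + inverse (e x) *\<^sub>M R)
      + (e x *\<^sub>M P - inverse (e x) *\<^sub>M R))) \<longlongrightarrow> 0) at_top"
    using tendsto_add_zero[OF plus lim]
    by (rule tendsto_scale_mat_zero[where B = 1]) (simp add: e_def norm_mult norm_inverse)
  moreover have "((\<lambda>x. (e x / 2) *\<^sub>M ((e x *\<^sub>M P + inverse (e x) *\<^sub>M R)
      - (e x *\<^sub>M P - inverse (e x) *\<^sub>M R))) \<longlongrightarrow> 0) at_top"
    using tendsto_diff[OF plus lim, unfolded diff_zero]
    by (rule tendsto_scale_mat_zero[where B = 1]) (simp add: e_def norm_divide)
  moreover have "e x \<noteq> 0" for x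
    by (simp add: e_def)
  then have "inverse (2 * e x) *\<^sub>M ((e x *\<^sub>M P + inverse (e x) *\<^sub>M R)
      + (e x *\<^sub>M P - inverse (e x) *\<^sub>M R)) = P"
    and "(e x / 2) *\<^sub>M ((e x *\<^sub>M P + inverse (e x) *\<^sub>M R)
      - (e x *\<^sub>M P - inverse (e x) *\<^sub>M R)) = R" for x
    by (simp_all add: vec_eq_iff algebra_simps)
  ultimately show "P = 0" and "R = 0"
    by (simp_all add: tendsto_const_iff)
qed

lemma integral_tail_less:
  fixes g :: "real \<Rightarrow> real"
  assumes g: "g integrable_on {a..}" "\<And>x. a \<le> x \<Longrightarrow> 0 \<le> g x" and "e > 0"
  obtains x0 where "a \<le> x0" "\<And>x y. x0 \<le> x \<Longrightarrow> x \<le> y \<Longrightarrow> integral {x..y} g < e"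
proof -
  define \<nu> where "\<nu> x = integral {a..x} g" for x
  have g_sub: "g integrable_on {x..y}" if "a \<le> x" for x y
    by (rule integrable_on_subinterval[OF g(1)]) (use that in auto)
  have \<nu>_le: "\<nu> x \<le> integral {a..} g" if "a \<le> x" for x
    unfolding \<nu>_def by (rule integral_subset_le) (use g g_sub that in auto)
  have \<nu>_diff: "integral {x..y} g = \<nu> y - \<nu> x" if "a \<le> x" "x \<le> y" for x y
    using integral_interval_diff[OF g_sub[OF order_refl, of y] that order_refl] by (simp add: \<nu>_def)
  have nonneg: "0 \<le> integral {x..y} g" if "a \<le> x" for x y
    by (rule integral_nonneg) (use g_sub g that in auto)
  have "bdd_above (\<nu> ` {a..})"
    using \<nu>_le by (intro bdd_aboveI[where M = "integral {a..} g"]) auto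
  moreover have "Sup (\<nu> ` {a..}) - e < Sup (\<nu> ` {a..})"
    using \<open>e > 0\<close> by simp
  ultimately obtain x0 where "a \<le> x0" "Sup (\<nu> ` {a..}) - e < \<nu> x0"
    by (subst (asm) less_cSup_iff) auto
  show ?thesis
  proof (rule that[OF \<open>a \<le> x0\<close>])
    fix x y assume "x0 \<le> x" "x \<le> y"
    have "\<nu> y \<le> Sup (\<nu> ` {a..})"
      using \<open>bdd_above (\<nu> ` {a..})\<close> \<open>a \<le> x0\<close> \<open>x0 \<le> x\<close> \<open>x \<le> y\<close> by (intro cSup_upper) auto
    moreover have "\<nu> x0 \<le> \<nu> x"
      using \<nu>_diff[of x0 x] nonneg[of x0 x] \<open>a \<le> x0\<close> \<open>x0 \<le> x\<close> by simp
    ultimately show "integral {x..y} g < e"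
      using \<nu>_diff[of x y] \<open>a \<le> x0\<close> \<open>x0 \<le> x\<close> \<open>x \<le> y\<close> \<open>Sup (\<nu> ` {a..}) - e < \<nu> x0\<close> by simp
  qed
qed

lemma convergent_at_top_if_increments_dominated:
  fixes f :: "real \<Rightarrow> 'a::banach" and g :: "real \<Rightarrow> real"
  assumes g: "g integrable_on {a..}" "\<And>x. a \<le> x \<Longrightarrow> 0 \<le> g x"
    and increments: "\<And>x y. a \<le> x \<Longrightarrow> x \<le> y \<Longrightarrow> norm (f y - f x) \<le> integral {x..y} g"
  obtains L where "(f \<longlongrightarrow> L) at_top"
proof -
  have "cauchy_filter (filtermap f at_top)"
    unfolding cauchy_filter_metric_filtermap
  proof (intro allI impI)
    fix e :: real assume "e > 0"
    then obtain x0 where "a \<le> x0" and x0: "\<And>x y. x0 \<le> x \<Longrightarrow> x \<le> y \<Longrightarrow> integral {x..y} g < e"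
      using integral_tail_less[OF g] by blast
    have "dist (f x) (f y) < e" if "x0 \<le> x" "x0 \<le> y" for x y
      using increments[of x y] increments[of y x] x0[of x y] x0[of y x] that \<open>a \<le> x0\<close>
      by (cases "x \<le> y") (auto simp: dist_norm norm_minus_commute)
    then show "\<exists>P. eventually P at_top \<and> (\<forall>x y. P x \<and> P y \<longrightarrow> dist (f x) (f y) < e)"
      by (intro exI[of _ "\<lambda>x. x0 \<le> x"]) (auto intro: eventually_ge_at_top)
  qed
  then obtain L where "filtermap f at_top \<le> nhds L"
    using cauchy_filter_complete_converges[OF _ complete_UNIV, of "filtermap f at_top"]
    by (auto simp: filtermap_bot_iff trivial_limit_at_top_linorder)
  then show ?thesis
    using that unfolding filterlim_def by blast
qed

lemma bounded_if_asymptotically_bounded: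
  fixes f g :: "real \<Rightarrow> 'a::real_normed_vector"
  assumes "continuous_on {a..} f" and lim: "((\<lambda>x. f x - g x) \<longlongrightarrow> 0) at_top"
    and "\<And>x. norm (g x) \<le> B"
  obtains M where "\<And>x. a \<le> x \<Longrightarrow> norm (f x) \<le> M"
proof -
  obtain x0 where x0: "\<And>x. x0 \<le> x \<Longrightarrow> norm (f x - g x) < 1"
    using tendstoD[OF lim zero_less_one] by (auto simp: eventually_at_top_linorder)
  have "continuous_on {a..max a x0} f"
    using assms(1) by (rule continuous_on_subset) auto
  then obtain M where M: "\<And>x. x \<in> {a..max a x0} \<Longrightarrow> norm (f x) \<le> M"
    using compact_imp_bounded[OF compact_continuous_image] by (force simp: bounded_iff)
  have "norm (f x) \<le> max M (B + 1)" if "a \<le> x" for x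
  proof (cases "x \<le> max a x0")
    case False
    then have "norm (f x - g x) < 1"
      by (intro x0) simp
    then show ?thesis
      using norm_triangle_sub[of "f x" "g x"] assms(3)[of x] by linarith
  qed (use M that in force)
  then show ?thesis
    using that by blast
qed

lemma (in bounded_bilinear) tendsto_prod_diff_zero:
  assumes "((\<lambda>x. f x - g x) \<longlongrightarrow> 0) F" and "((\<lambda>x. h x - k x) \<longlongrightarrow> 0) F"
    and "\<And>x. norm (g x) \<le> B" and "\<And>x. norm (k x) \<le> B"
  shows "((\<lambda>x. prod (f x) (h x) - prod (g x) (k x)) \<longlongrightarrow> 0) F"
proof -
  have bounded: "Bfun g F" "Bfun k F"
    using assms(3,4) by (auto intro!: BfunI always_eventually)
  have "((\<lambda>x. prod (f x - g x) (h x - k x) + prod (f x - g x) (k x) + prod (g x) (h x - k x))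
      \<longlongrightarrow> 0) F"
    using tendsto_zero[OF assms(1,2)] Zfun_prod_Bfun[OF _ bounded(2)] Bfun_prod_Zfun[OF bounded(1)]
      assms(1,2) by (auto simp: tendsto_Zfun_iff intro!: Zfun_add)
  then show ?thesis
    by (simp add: diff_left diff_right algebra_simps)
qed

section \<open>Jost solutions\<close>

(* e^{ikx} I, the Jost solution of the free equation Q = 0. *)
definition free_wave :: "real \<Rightarrow> real \<Rightarrow> complex^'n^'n"
  where "free_wave k x = mat (exp (\<i> * complex_of_real k * complex_of_real x))"

definition free_wave' :: "real \<Rightarrow> real \<Rightarrow> complex^'n^'n"
  where "free_wave' k x = mat (\<i> * complex_of_real k * exp (\<i> * complex_of_real k * complex_of_real x))"

lemma has_vector_derivative_exp_i_real:
  "((\<lambda>x. exp (\<i> * complex_of_real k * complex_of_real x)) has_vector_derivative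
    \<i> * complex_of_real k * exp (\<i> * complex_of_real k * complex_of_real x)) (at x within S)"
proof -
  have "((\<lambda>z. exp (\<i> * complex_of_real k * z)) has_field_derivative
      \<i> * complex_of_real k * exp (\<i> * complex_of_real k * complex_of_real x)) (at (complex_of_real x))"
    by (auto intro!: derivative_eq_intros)
  then show ?thesis
    by (rule has_vector_derivative_real_field)
qed

lemma has_vector_derivative_free_wave:
  "(free_wave k has_vector_derivative free_wave' k x) (at x within S)"
  unfolding free_wave_def free_wave'_def
  by (rule bounded_linear.has_vector_derivative[OF bounded_linear_mat has_vector_derivative_exp_i_real])

lemma has_vector_derivative_free_wave':
  "(free_wave' k has_vector_derivative mat (- (complex_of_real k)\<^sup>2) ** free_wave k x) (at x within S)"
proof -
  have "((\<lambda>x. \<i> * complex_of_real k * exp (\<i> * complex_of_real k * complex_of_real x))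
      has_vector_derivative - (complex_of_real k)\<^sup>2 * exp (\<i> * complex_of_real k * complex_of_real x))
      (at x within S)"
    using has_vector_derivative_mult_right[OF has_vector_derivative_exp_i_real[of k x S],
        of "\<i> * complex_of_real k"]
    by (simp add: power2_eq_square algebra_simps)
  from bounded_linear.has_vector_derivative[OF bounded_linear_mat this] show ?thesis
    unfolding free_wave_def free_wave'_def by (simp add: mult.commute)
qed

lemma norm_free_wave: "norm (free_wave k x :: complex^'n^'n) = norm (mat 1 :: complex^'n^'n)"
  unfolding free_wave_def norm_mat[of "exp _"] by simp

lemma norm_free_wave': "norm (free_wave' k x :: complex^'n^'n) = \<bar>k\<bar> * norm (mat 1 :: complex^'n^'n)"
  unfolding free_wave'_def norm_mat[of "_ * _"] by (simp add: norm_mult)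

lemma wronskian_free_wave:
  "wronskian (free_wave k x) (free_wave' k x) Y Y'
    = exp (- (\<i> * complex_of_real k * complex_of_real x)) *\<^sub>M (Y' + (\<i> * complex_of_real k) *\<^sub>M Y)"
  by (simp add: wronskian_def free_wave_def free_wave'_def exp_cnj scale_mat_distribs algebra_simps)

lemma integrated_solution_free_wave:
  assumes "x \<le> y" "N integrable_on {x..y}"
    and "\<And>u. u \<in> {x..y} \<Longrightarrow> c\<^sup>2 * norm (mat 1 :: complex^'n^'n) \<le> N u"
  shows "integrated_solution x y (free_wave c :: real \<Rightarrow> complex^'n^'n) (free_wave' c)
    (\<lambda>u. mat (- complex_of_real (c\<^sup>2))) N"
proof
  show "((\<lambda>u. mat (- complex_of_real (c\<^sup>2)) ** free_wave c u)
      has_integral (free_wave' c t - free_wave' c x)) {x..t}" if "x \<le> t" for t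
    using fundamental_theorem_of_calculus[OF that has_vector_derivative_free_wave'[of c]] by simp
  show "norm (mat (- complex_of_real (c\<^sup>2)) :: complex^'n^'n) \<le> N u" if "u \<in> {x..y}" for u
    using assms(3)[OF that] norm_mat[where 'n = 'n and c = "- complex_of_real (c\<^sup>2)"]
    by (simp del: of_real_power)
qed (use assms has_vector_derivative_free_wave in auto)

locale jost_solution =
  fixes Q :: "real \<Rightarrow> complex^'n^'n" and F Fx :: "real \<Rightarrow> complex \<Rightarrow> complex^'n^'n"
  assumes Q_selfadjoint: "\<And>t. t \<ge> 0 \<Longrightarrow> adj (Q t) = Q t"
    and Q_integrable: "(\<lambda>t. (1 + t) *\<^sub>R Q t) absolutely_integrable_on {0..}"
    and F_deriv: "\<And>z x. Im z \<ge> 0 \<Longrightarrow> x \<ge> 0 \<Longrightarrow>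
      ((\<lambda>y. F y z) has_vector_derivative Fx x z) (at x within {0..})"
    and F_eq: "\<And>z x. Im z \<ge> 0 \<Longrightarrow> x \<ge> 0 \<Longrightarrow>
      ((\<lambda>t. Q t ** F t z - mat (z^2) ** F t z) has_integral (Fx x z - Fx 0 z)) {0..x}"
    and F_asym: "\<And>z. Im z \<ge> 0 \<Longrightarrow>
      ((\<lambda>x. F x z - mat (exp (\<i> * z * complex_of_real x))) \<longlongrightarrow> 0) at_top"
begin

(* An integrable majorant of norm (Q t), supplied by the moment condition. *)
definition weight :: "real \<Rightarrow> real" where "weight t = norm ((1 + t) *\<^sub>R Q t)"

lemma weight_nonneg [simp]: "0 \<le> weight t"
  by (simp add: weight_def)

lemma weight_integrable: "weight integrable_on {0..}"
  using Q_integrable unfolding absolutely_integrable_on_def weight_def by simp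

lemma norm_Q_le_weight: "0 \<le> t \<Longrightarrow> norm (Q t) \<le> weight t"
  using mult_right_mono[of 1 "1 + t" "norm (Q t)"] by (simp add: weight_def)

lemma weight_integrable_interval: "0 \<le> a \<Longrightarrow> weight integrable_on {a..b}"
  by (rule integrable_on_subinterval[OF weight_integrable]) auto

lemma integrated_solution_F:
  fixes k x y :: real
  assumes "0 \<le> x" "x \<le> y"
  shows "integrated_solution x y (\<lambda>t. F t k) (\<lambda>t. Fx t k) (\<lambda>u. Q u - mat (complex_of_real (k\<^sup>2)))
    (\<lambda>u. weight u + k\<^sup>2 * norm (mat 1 :: complex^'n^'n))"
proof
  show "((\<lambda>t. F t k) has_vector_derivative Fx u k) (at u within {x..y})" if "u \<in> {x..y}" for u
    using F_deriv[of "complex_of_real k" u] that assms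
    by (auto intro: has_vector_derivative_within_subset)
  show "((\<lambda>u. (Q u - mat (complex_of_real (k\<^sup>2))) ** F u k) has_integral (Fx t k - Fx x k)) {x..t}"
    if "x \<le> t" for t
  proof (rule has_integral_increment_subinterval[OF _ \<open>0 \<le> x\<close> that order_refl])
    show "((\<lambda>u. (Q u - mat (complex_of_real (k\<^sup>2))) ** F u k) has_integral (Fx s k - Fx 0 k)) {0..s}"
      if "0 \<le> s" for s
      using F_eq[of "complex_of_real k" s] that by (simp add: matrix_mult_diff_rdistrib)
  qed
  show "(\<lambda>u. weight u + k\<^sup>2 * norm (mat 1 :: complex^'n^'n)) integrable_on {x..y}"
    using weight_integrable_interval[OF \<open>0 \<le> x\<close>] by (intro integrable_add) auto
  show "norm (Q u - mat (complex_of_real (k\<^sup>2))) \<le> weight u + k\<^sup>2 * norm (mat 1 :: complex^'n^'n)"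
    if "u \<in> {x..y}" for u
    using norm_triangle_ineq4[of "Q u" "mat (complex_of_real (k\<^sup>2))"] norm_Q_le_weight[of u]
      norm_mat[where 'n = 'n and c = "complex_of_real (k\<^sup>2)"] that assms
    by (auto simp del: of_real_power)
qed fact

lemma F_bounded:
  fixes k :: real
  obtains M where "\<And>x. 0 \<le> x \<Longrightarrow> norm (F x k) \<le> M"
proof (rule bounded_if_asymptotically_bounded)
  show "continuous_on {0..} (\<lambda>x. F x k)"
    using F_deriv[of "complex_of_real k"] by (intro continuous_on_vector_derivative) auto
  show "((\<lambda>x. F x k - free_wave k x) \<longlongrightarrow> 0) at_top"
    using F_asym[of "complex_of_real k"] by (simp add: free_wave_def)
qed (auto simp: norm_free_wave)

lemma wronskian_F_constant:
  fixes a b x :: real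
  assumes "a\<^sup>2 = b\<^sup>2" and "0 \<le> x"
  shows "wronskian (F x a) (Fx x a) (F x b) (Fx x b) = wronskian (F 0 a) (Fx 0 a) (F 0 b) (Fx 0 b)"
proof -
  interpret solution_pair 0 x "\<lambda>t. F t a" "\<lambda>t. Fx t a" "\<lambda>u. Q u - mat (complex_of_real (b\<^sup>2))"
    "\<lambda>t. F t b" "\<lambda>t. Fx t b" "\<lambda>u. Q u - mat (complex_of_real (b\<^sup>2))"
    "\<lambda>u. weight u + b\<^sup>2 * norm (mat 1 :: complex^'n^'n)"
    unfolding solution_pair_def
    using integrated_solution_F[OF order_refl \<open>0 \<le> x\<close>, where k = a, unfolded assms(1)]
      integrated_solution_F[OF order_refl \<open>0 \<le> x\<close>, where k = b]
    by blast
  have "norm (W x - W 0) \<le> integral {0..x} (\<lambda>u. 0)"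
    by (rule wronskian_variation_le) (auto simp: Q_selfadjoint)
  then show ?thesis
    by simp
qed

lemma free_wronskian_increment_le:
  fixes c k x y :: real
  assumes "c\<^sup>2 = k\<^sup>2" "0 \<le> x" "x \<le> y" and MF: "\<And>t. 0 \<le> t \<Longrightarrow> norm (F t k) \<le> MF"
  shows "norm (wronskian (free_wave c y) (free_wave' c y) (F y k) (Fx y k)
      - wronskian (free_wave c x) (free_wave' c x) (F x k) (Fx x k))
    \<le> integral {x..y} (\<lambda>u. norm (mat 1 :: complex^'n^'n) * MF * weight u)"
proof -
  let ?N = "\<lambda>u. weight u + k\<^sup>2 * norm (mat 1 :: complex^'n^'n)"
  note F = integrated_solution_F[OF \<open>0 \<le> x\<close> \<open>x \<le> y\<close>, where k = k]
  have bound: "c\<^sup>2 * norm (mat 1 :: complex^'n^'n) \<le> ?N u" for u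
    using assms(1) by simp
  interpret solution_pair x y "free_wave c" "free_wave' c" "\<lambda>u. mat (- complex_of_real (k\<^sup>2))"
    "\<lambda>t. F t k" "\<lambda>t. Fx t k" "\<lambda>u. Q u - mat (complex_of_real (k\<^sup>2))" ?N
    unfolding solution_pair_def
    using integrated_solution_free_wave[OF \<open>x \<le> y\<close> integrated_solution.N_integrable[OF F] bound,
        unfolded assms(1)] F
    by (simp del: of_real_power)
  show ?thesis
  proof (rule wronskian_variation_le)
    show "(\<lambda>u. norm (mat 1 :: complex^'n^'n) * MF * weight u) integrable_on {x..y}"
      using integrable_on_cmult_left[OF weight_integrable_interval[OF \<open>0 \<le> x\<close>]] by simp
    fix u t assume "u \<in> {x..y}" "t \<in> {x..y}"
    have "norm (adj (free_wave c t) ** Q u ** F t k) \<le> norm (adj (free_wave c t) ** Q u) * norm (F t k)"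
      by (rule norm_matrix_mult_le)
    also have "\<dots> \<le> norm (adj (free_wave c t :: complex^'n^'n)) * norm (Q u) * norm (F t k)"
      by (rule mult_right_mono) (rule norm_matrix_mult_le, rule norm_ge_zero)
    also have "\<dots> = norm (mat 1 :: complex^'n^'n) * (norm (Q u) * norm (F t k))"
      by (simp add: norm_free_wave)
    also have "\<dots> \<le> norm (mat 1 :: complex^'n^'n) * (weight u * MF)"
      using norm_Q_le_weight[of u] MF[of t] \<open>0 \<le> x\<close> \<open>u \<in> {x..y}\<close> \<open>t \<in> {x..y}\<close>
      by (intro mult_left_mono mult_mono) auto
    also have "\<dots> = norm (mat 1 :: complex^'n^'n) * MF * weight u"
      by simp
    finally show "norm (adj (free_wave c t) ** (Q u - mat (complex_of_real (k\<^sup>2))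
        - adj (mat (- complex_of_real (k\<^sup>2)))) ** F t k) \<le> norm (mat 1 :: complex^'n^'n) * MF * weight u"
      by (simp add: diff_diff_eq del: of_real_power)
  qed
qed

lemma free_wronskian_convergent:
  fixes c k :: real
  assumes "c\<^sup>2 = k\<^sup>2"
  obtains L where "((\<lambda>x. wronskian (free_wave c x) (free_wave' c x) (F x k) (Fx x k)) \<longlongrightarrow> L) at_top"
proof -
  obtain MF where MF: "\<And>t. 0 \<le> t \<Longrightarrow> norm (F t k) \<le> MF"
    using F_bounded by blast
  have "(\<lambda>u. norm (mat 1 :: complex^'n^'n) * MF * weight u) integrable_on {0..}"
    using integrable_on_cmult_left[OF weight_integrable] by simp
  moreover have "0 \<le> norm (mat 1 :: complex^'n^'n) * MF * weight u" for u
    using order_trans[OF norm_ge_zero MF[of 0]] by simp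
  ultimately show ?thesis
    using convergent_at_top_if_increments_dominated[OF _ _ free_wronskian_increment_le[OF assms _ _ MF]]
      that by blast
qed

(* The Wronskians with e^{\<plusminus>ikx} converge by free_wronskian_increment_le; comparing them with
   F(x,k) ~ e^{ikx} identifies the limits through the oscillation lemma. *)
lemma free_wronskian_limits:
  fixes k :: real
  assumes "k \<noteq> 0"
  shows "((\<lambda>x. wronskian (free_wave k x) (free_wave' k x) (F x k) (Fx x k)) \<longlongrightarrow> mat (2 * \<i> * k)) at_top"
    and "((\<lambda>x. wronskian (free_wave (- k) x) (free_wave' (- k) x) (F x k) (Fx x k)) \<longlongrightarrow> 0) at_top"
proof -
  define e where "e x = exp (\<i> * complex_of_real k * complex_of_real x)" for x :: real
  define ik where "ik = \<i> * complex_of_real k"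
  have e: "e x \<noteq> 0" "cmod (e x) = 1" "cmod (inverse (e x)) = 1" for x
    by (simp_all add: e_def norm_inverse)
  define wp where "wp x = wronskian (free_wave k x) (free_wave' k x) (F x k) (Fx x k)" for x
  define wm where "wm x = wronskian (free_wave (- k) x) (free_wave' (- k) x) (F x k) (Fx x k)" for x
  have wpm: "wp x = inverse (e x) *\<^sub>M (Fx x k + ik *\<^sub>M F x k)"
    "wm x = e x *\<^sub>M (Fx x k - ik *\<^sub>M F x k)" for x
    by (simp_all add: wronskian_free_wave wp_def wm_def e_def ik_def exp_minus scale_mat_minus_left)
  obtain Lp where Lp: "(wp \<longlongrightarrow> Lp) at_top"
    using free_wronskian_convergent[of k k] unfolding wp_def by blast
  obtain Lm where Lm: "(wm \<longlongrightarrow> Lm) at_top"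
    using free_wronskian_convergent[of "- k" k, OF power2_minus] unfolding wm_def by blast
  have F_lim: "((\<lambda>x. F x k - mat (e x)) \<longlongrightarrow> 0) at_top"
    using F_asym[of "complex_of_real k"] by (simp add: e_def)
  have "((\<lambda>x. (2 * ik) *\<^sub>M (F x k - mat (e x)) + e x *\<^sub>M (Lp - wp x) - inverse (e x) *\<^sub>M (Lm - wm x))
      \<longlongrightarrow> 0) at_top"
    using tendsto_diff[OF tendsto_add[OF
          tendsto_scale_mat_zero[where c = "\<lambda>_. 2 * ik", OF F_lim order_refl]
          tendsto_scale_mat_zero[OF tendsto_diff[OF tendsto_const[of Lp] Lp, unfolded diff_self]
            e(2)[THEN eq_refl]]]
        tendsto_scale_mat_zero[OF tendsto_diff[OF tendsto_const[of Lm] Lm, unfolded diff_self]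
          e(3)[THEN eq_refl]]]
    by simp
  moreover have "(2 * ik) *\<^sub>M (F x k - mat (e x)) + e x *\<^sub>M (Lp - wp x) - inverse (e x) *\<^sub>M (Lm - wm x)
      = e x *\<^sub>M (Lp - mat (2 * ik)) - inverse (e x) *\<^sub>M Lm" for x
    using e(1)[of x] by (simp add: wpm vec_eq_iff mat_def field_simps)
  ultimately have "Lp = mat (2 * ik)" "Lm = 0"
    using oscillation_tendsto_zero_imp_zero[OF \<open>k \<noteq> 0\<close>, of "Lp - mat (2 * ik)" Lm]
    by (simp_all add: e_def)
  then show "((\<lambda>x. wronskian (free_wave k x) (free_wave' k x) (F x k) (Fx x k)) \<longlongrightarrow> mat (2 * \<i> * k)) at_top"
    and "((\<lambda>x. wronskian (free_wave (- k) x) (free_wave' (- k) x) (F x k) (Fx x k)) \<longlongrightarrow> 0) at_top"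
    using Lp Lm unfolding wp_def[abs_def] wm_def[abs_def] ik_def by (simp_all add: mult.assoc)
qed

lemma Fx_asymptotic:
  fixes k :: real
  assumes "k \<noteq> 0"
  shows "((\<lambda>x. Fx x k - free_wave' k x) \<longlongrightarrow> 0) at_top"
proof -
  define e where "e x = exp (\<i> * complex_of_real k * complex_of_real x)" for x :: real
  define ik where "ik = \<i> * complex_of_real k"
  have e: "e x \<noteq> 0" "cmod (e x) = 1" "cmod (inverse (e x)) = 1" for x
    by (simp_all add: e_def norm_inverse)
  have free_wave'_e: "free_wave' k x = mat (ik * e x)" for x
    by (simp add: free_wave'_def e_def ik_def)
  define wp where "wp x = inverse (e x) *\<^sub>M (Fx x k + ik *\<^sub>M F x k)" for x
  define wm where "wm x = e x *\<^sub>M (Fx x k - ik *\<^sub>M F x k)" for x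
  have "((\<lambda>x. wp x - mat (2 * ik)) \<longlongrightarrow> 0) at_top" "(wm \<longlongrightarrow> 0) at_top"
    using free_wronskian_limits[OF assms]
    by (simp_all add: wronskian_free_wave wp_def[abs_def] wm_def[abs_def] e_def ik_def exp_minus
        scale_mat_minus_left LIM_zero_iff mult.assoc)
  then have "((\<lambda>x. (1 / 2) *\<^sub>M (e x *\<^sub>M (wp x - mat (2 * ik)) + inverse (e x) *\<^sub>M wm x)) \<longlongrightarrow> 0) at_top"
    using e by (intro tendsto_scale_mat_zero[where B = 1] tendsto_add_zero) auto
  moreover have "Fx x k - free_wave' k x
      = (1 / 2) *\<^sub>M (e x *\<^sub>M (wp x - mat (2 * ik)) + inverse (e x) *\<^sub>M wm x)" for x
    using e(1)[of x] by (simp add: wp_def wm_def free_wave'_e vec_eq_iff mat_def field_simps)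
  ultimately show ?thesis
    by simp
qed

lemma wronskian_free_waves:
  fixes a b :: real
  assumes "a\<^sup>2 = b\<^sup>2"
  shows "wronskian (free_wave a x) (free_wave' a x) (free_wave b x) (free_wave' b x)
    = (mat (\<i> * (a + b)) :: complex^'n^'n)"
proof -
  have "exp (- (\<i> * complex_of_real a * complex_of_real x))
      * (\<i> * complex_of_real b * exp (\<i> * complex_of_real b * complex_of_real x)
        + \<i> * complex_of_real a * exp (\<i> * complex_of_real b * complex_of_real x))
      = \<i> * (a + b)"
  proof (cases "a = b")
    case True
    then show ?thesis
      by (simp add: exp_minus field_simps)
  next
    case False
    then have "a = - b"
      using assms power2_eq_iff by blast
    then show ?thesis
      by simp
  qed
  then show ?thesis
    unfolding wronskian_free_wave by (simp add: free_wave_def free_wave'_def)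
qed

lemma wronskian_F_at_zero:
  fixes a b :: real
  assumes "a \<noteq> 0" "b \<noteq> 0" "a\<^sup>2 = b\<^sup>2"
  shows "wronskian (F 0 a) (Fx 0 a) (F 0 b) (Fx 0 b) = mat (\<i> * (a + b))"
proof -
  define W where "W x = wronskian (F x a) (Fx x a) (F x b) (Fx x b)" for x
  define B where "B = (1 + \<bar>a\<bar> + \<bar>b\<bar>) * norm (mat 1 :: complex^'n^'n)"
  have bounds: "norm (free_wave c x :: complex^'n^'n) \<le> B" "norm (free_wave' c x :: complex^'n^'n) \<le> B"
    if "c = a \<or> c = b" for c x
    using that by (auto simp: B_def norm_free_wave norm_free_wave' algebra_simps)
  have adj_mult: "bounded_bilinear (\<lambda>A B :: complex^'n^'n. adj A ** B)"
    by (rule bounded_bilinear.comp1[OF bounded_bilinear_matrix_mult bounded_linear_adj])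
  have F_lim: "((\<lambda>x. F x c - free_wave c x) \<longlongrightarrow> 0) at_top" for c :: real
    using F_asym[of c] by (simp add: free_wave_def)
  have "((\<lambda>x. adj (F x a) ** Fx x b - adj (free_wave a x) ** free_wave' b x) \<longlongrightarrow> 0) at_top"
    using bounded_bilinear.tendsto_prod_diff_zero[OF adj_mult F_lim Fx_asymptotic[OF assms(2)]
        bounds(1) bounds(2)] by simp
  moreover have "((\<lambda>x. adj (Fx x a) ** F x b - adj (free_wave' a x) ** free_wave b x) \<longlongrightarrow> 0) at_top"
    using bounded_bilinear.tendsto_prod_diff_zero[OF adj_mult Fx_asymptotic[OF assms(1)] F_lim
        bounds(2) bounds(1)] by simp
  ultimately have "((\<lambda>x. (adj (F x a) ** Fx x b - adj (free_wave a x) ** free_wave' b x)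
      - (adj (Fx x a) ** F x b - adj (free_wave' a x) ** free_wave b x)) \<longlongrightarrow> 0 - 0) at_top"
    by (rule tendsto_diff)
  moreover have "W x - mat (\<i> * (a + b))
      = (adj (F x a) ** Fx x b - adj (free_wave a x) ** free_wave' b x)
      - (adj (Fx x a) ** F x b - adj (free_wave' a x) ** free_wave b x)" for x
    unfolding W_def wronskian_free_waves[OF assms(3), of x, symmetric] wronskian_def
    by (simp add: algebra_simps)
  ultimately have lim: "(W \<longlongrightarrow> mat (\<i> * (a + b))) at_top"
    by (simp add: LIM_zero_cancel)
  have ev: "\<forall>\<^sub>F x in at_top. W x = W 0"
    using eventually_ge_at_top[of 0] unfolding W_def
    by eventually_elim (rule wronskian_F_constant[OF assms(3)])
  have "((\<lambda>x::real. W 0) \<longlongrightarrow> mat (\<i> * (a + b))) at_top"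
    using lim unfolding tendsto_cong[OF ev] .
  then show ?thesis
    by (simp add: W_def tendsto_const_iff)
qed

end

theorem corollary1:
  fixes Q :: "real \<Rightarrow> complex^'n^'n"
    and U :: "complex^'n^'n"
    and F Fx :: "real \<Rightarrow> complex \<Rightarrow> complex^'n^'n"
    and k :: real
  assumes Q_sa: "\<And>t. t \<ge> 0 \<Longrightarrow> adj (Q t) = Q t"
    and Q_int: "(\<lambda>t. (1 + t) *\<^sub>R Q t) absolutely_integrable_on {0..}"
    and U_unitary: "adj U ** U = mat 1"
    and no_virtual: "\<not> zero_virtual_level Q U"
    and F_deriv: "\<And>z x. Im z \<ge> 0 \<Longrightarrow> x \<ge> 0 \<Longrightarrow>
                    ((\<lambda>y. F y z) has_vector_derivative Fx x z) (at x within {0..})"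
    and F_eq: "\<And>z x. Im z \<ge> 0 \<Longrightarrow> x \<ge> 0 \<Longrightarrow>
                    ((\<lambda>t. Q t ** F t z - mat (z^2) ** F t z) has_integral (Fx x z - Fx 0 z)) {0..x}"
    and F_asym: "\<And>z. Im z \<ge> 0 \<Longrightarrow>
                    ((\<lambda>x. F x z - mat (exp (\<i> * z * complex_of_real x))) \<longlongrightarrow> 0) at_top"
    and k_nz: "k \<noteq> 0"
  shows "let A = mat (1/2) ** (U + mat 1);
             B = mat (\<i>/2) ** (U - mat 1);
             S = - ((adj (F 0 (complex_of_real k)) ** B - adj (Fx 0 (complex_of_real k)) ** A) **
                    matrix_inv (adj (F 0 (- complex_of_real k)) ** B - adj (Fx 0 (- complex_of_real k)) ** A));
             Psi0 = F 0 (- complex_of_real k) + F 0 (complex_of_real k) ** S;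
             Psix0 = Fx 0 (- complex_of_real k) + Fx 0 (complex_of_real k) ** S
         in invertible (Psi0 + mat \<i> ** Psix0) \<and>
            U = (Psi0 - mat \<i> ** Psix0) ** matrix_inv (Psi0 + mat \<i> ** Psix0)"
proof -
  interpret jost_solution Q F Fx
    by (rule jost_solution.intro) (fact Q_sa Q_int F_deriv F_eq F_asym)+
  have "- k \<noteq> 0"
    using k_nz by simp
  interpret jost_boundary_problem "F 0 k" "Fx 0 k" "F 0 (- complex_of_real k)" "Fx 0 (- complex_of_real k)"
    k U
  proof
    show "wronskian (F 0 k) (Fx 0 k) (F 0 k) (Fx 0 k) = mat (2 * \<i> * k)"
      using wronskian_F_at_zero[OF k_nz k_nz] by (simp add: algebra_simps)
    show "wronskian (F 0 (- complex_of_real k)) (Fx 0 (- complex_of_real k)) (F 0 (- complex_of_real k))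
        (Fx 0 (- complex_of_real k)) = mat (- 2 * \<i> * k)"
      using wronskian_F_at_zero[OF \<open>- k \<noteq> 0\<close> \<open>- k \<noteq> 0\<close>] by (simp add: algebra_simps)
    show "wronskian (F 0 (- complex_of_real k)) (Fx 0 (- complex_of_real k)) (F 0 k) (Fx 0 k) = 0"
      using wronskian_F_at_zero[OF \<open>- k \<noteq> 0\<close> k_nz] by simp
  qed (fact k_nz U_unitary)+
  show ?thesis
    using U_eq_cayley_transform_Psi
    unfolding Let_def A_def B_def scattering_matrix_def Psi_def Psi'_def .
qed

end
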